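(* Assume that $\theta_\varepsilon \ll \varepsilon|\log \varepsilon|$ and that $u_\varepsilon\colon\Omega_\varepsilon\to\mathcal{S}_\varepsilon$ satisfy $\frac{1}{\varepsilon \theta_\varepsilon}E_\varepsilon(u_\varepsilon) \leq C$. Let $G_{u_\varepsilon} \in \mathcal{D}_2(\Omega \times \mathbb{R}^2)$ be the currents associated to $u_\varepsilon$ and assume that $G_{u_\varepsilon}\rightharpoonup T$ in $\mathcal{D}_2(\Omega\times\mathbb{R}^2)$ with $T \in \mathrm{cart}(\Omega \times \mathbb{S}^1)$, represented as $T = \vec{T} |T|$. Then for every open set $A \subset\subset \Omega$ $$\int_{A \times \mathbb{R}^2}\Phi( \vec{T} )\,d |T| \leq \liminf_{\varepsilon \to 0} \int_{A \times \mathbb{R}^2}\Phi( \vec{G}_{u_\varepsilon} )\,d |G_{u_\varepsilon}| .$$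
   Context: $\Omega\subset\mathbb{R}^2$ bounded open with Lipschitz boundary, $\mathbb{R}^2\cong\mathbb{C}$. For $\varepsilon>0$ (along a sequence $\varepsilon\to0$): $N_\varepsilon\in\mathbb{N}$, $\theta_\varepsilon=2\pi/N_\varepsilon$, $\mathcal{S}_\varepsilon=\{\exp(\iota k\theta_\varepsilon):k=0,\dots,N_\varepsilon-1\}$, $\Omega_\varepsilon=\Omega\cap\varepsilon\mathbb{Z}^2$, $E_\varepsilon(u)=\frac12\sum_{\langle i,j\rangle}\varepsilon^2|u(\varepsilon i)-u(\varepsilon j)|^2$ over ordered nearest-neighbour pairs $(i,j)$ ($|i-j|=1$) with $\varepsilon i,\varepsilon j\in\Omega_\varepsilon$; $\alpha_\varepsilon\ll\beta_\varepsilon$ means $\alpha_\varepsilon/\beta_\varepsilon\to0$. Lattice maps are identified with piecewise constant interpolations on squares $\varepsilon i+[0,\varepsilon)^2$. Currents: $\mathcal{D}_k(O)$ dual of smooth compactly supported $k$-forms; weak convergence is pointwise on forms; finite-mass currents are written $T=\vec T|T|$, $|T|$ the total variation measure, $|\vec T|=1$. Points $(x,y)\in\mathbb{R}^2\times\mathbb{R}^2$ with bases $e_1,e_2$, $\bar e_1,\bar e_2$; $\hat x^1=x^2$, $\hat x^2=x^1$. For piecewise constant $u$ with values in $\mathbb{S}^1$: $G_u(\phi\,dx^1\wedge dx^2)=\int_\Omega\phi(x,u(x))dx$, $G_u(\phi\,d\hat x^l\wedge dy^m)=(-1)^{2-l}\int_{J_u}\{\int_{\gamma_x}\phi(x,y)dy^m\}\nu_u^l\,d\mathcal{H}^1$,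 $G_u(\phi\,dy^1\wedge dy^2)=0$, with $J_u$ the jump set, $\nu_u$ its normal, $\gamma_x$ the oriented geodesic arc from $u^-(x)$ to $u^+(x)$. $\mathrm{cart}(\Omega\times\mathbb{S}^1)$: integer multiplicity rectifiable $T\in\mathcal{D}_2(\Omega\times\mathbb{R}^2)$ with $\partial T=0$ in $\Omega\times\mathbb{R}^2$, $\pi_\#T=[\![\Omega]\!]$, $T(\phi\,dx^1\wedge dx^2)\ge0$ for $\phi\ge0$, finite mass, $\sup\{T(\phi|y|dx^1\wedge dx^2):|\phi|\le1\}<\infty$, $\mathrm{supp}\,T\subset\overline\Omega\times\mathbb{S}^1$. For a 2-vector $\xi=\xi^{\bar00}e_1\wedge e_2+\xi^{21}e_1\wedge\bar e_1+\xi^{22}e_1\wedge\bar e_2+\xi^{11}e_2\wedge\bar e_1+\xi^{12}e_2\wedge\bar e_2+\xi^{0\bar0}\bar e_1\wedge\bar e_2$, $\Phi(\xi)=\sqrt{(\xi^{21})^2+(\xi^{22})^2}+\sqrt{(\xi^{11})^2+(\xi^{12})^2}$. *)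

theory Defs
  imports "HOL-Analysis.Analysis"
begin

section \<open>Points of Omega x R^2, identified with complex x complex\<close>

type_synonym pt = "complex \<times> complex"

text \<open>Coordinates z = (x1,x2,y1,y2) indexed 0,1,2,3.\<close>
definition coord :: "nat \<Rightarrow> pt \<Rightarrow> real" where
  "coord a z = (if a = 0 then Re (fst z) else if a = 1 then Im (fst z)
               else if a = 2 then Re (snd z) else Im (snd z))"

definition coordvec :: "nat \<Rightarrow> pt" where
  "coordvec a = (if a = 0 then (1,0) else if a = 1 then (\<i>,0)
                 else if a = 2 then (0,1) else (0,\<i>))"

datatype cov2 = DX12 | DX1Y1 | DX1Y2 | DX2Y1 | DX2Y2 | DY12

lemma UNIV_cov2: "(UNIV :: cov2 set) = {DX12, DX1Y1, DX1Y2, DX2Y1, DX2Y2, DY12}"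
  using cov2.exhaust by auto

instance cov2 :: finite
  by standard (simp add: UNIV_cov2)

text \<open>Index pairs: DX12 = e1/\e2 (dx1/\dx2), DX1Y1 = e1/\ebar1, DX1Y2 = e1/\ebar2,
  DX2Y1 = e2/\ebar1, DX2Y2 = e2/\ebar2, DY12 = ebar1/\ebar2.\<close>
fun pair_of :: "cov2 \<Rightarrow> nat \<times> nat" where
  "pair_of DX12 = (0,1)" | "pair_of DX1Y1 = (0,2)" | "pair_of DX1Y2 = (0,3)"
| "pair_of DX2Y1 = (1,2)" | "pair_of DX2Y2 = (1,3)" | "pair_of DY12 = (2,3)"

type_synonym vec2 = "real ^ cov2"

definition wedge :: "pt \<Rightarrow> pt \<Rightarrow> vec2" where
  "wedge v w = (\<chi> c. case pair_of c of (a,b) \<Rightarrow> coord a v * coord b w - coord b v * coord a w)"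

definition Phi :: "vec2 \<Rightarrow> real" where
  "Phi \<xi> = sqrt ((\<xi>$DX1Y1)\<^sup>2 + (\<xi>$DX1Y2)\<^sup>2) + sqrt ((\<xi>$DX2Y1)\<^sup>2 + (\<xi>$DX2Y2)\<^sup>2)"

fun Ck :: "nat \<Rightarrow> ('a::real_normed_vector \<Rightarrow> 'b::real_normed_vector) \<Rightarrow> bool" where
  "Ck 0 f = continuous_on UNIV f"
| "Ck (Suc n) f = ((\<forall>x. f differentiable (at x)) \<and>
                   (\<forall>v. Ck n (\<lambda>x. frechet_derivative f (at x) v)))"

definition smooth :: "('a::real_normed_vector \<Rightarrow> 'b::real_normed_vector) \<Rightarrow> bool" where
  "smooth f \<longleftrightarrow> (\<forall>n. Ck n f)"

definition tsupp :: "('a::topological_space \<Rightarrow> 'b::zero) \<Rightarrow> 'a set" where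
  "tsupp f = closure {x. f x \<noteq> 0}"

definition test_funs :: "'a::real_normed_vector set \<Rightarrow> ('a \<Rightarrow> real) set" where
  "test_funs W = {f. smooth f \<and> compact (tsupp f) \<and> tsupp f \<subseteq> W}"

text \<open>Smooth compactly supported 2-forms on W (coefficients w.r.t. the basis dz^a/\dz^b).\<close>
definition test_forms :: "pt set \<Rightarrow> (pt \<Rightarrow> vec2) set" where
  "test_forms W = {\<omega>. smooth \<omega> \<and> compact (tsupp \<omega>) \<and> tsupp \<omega> \<subseteq> W}"

text \<open>A 2-current is represented by its action on 2-forms (only test forms matter).\<close>
type_synonym current2 = "(pt \<Rightarrow> vec2) \<Rightarrow> real"

definition form_comp :: "cov2 \<Rightarrow> (pt \<Rightarrow> real) \<Rightarrow> pt \<Rightarrow> vec2" where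
  "form_comp c \<phi> z = (\<chi> d. if d = c then \<phi> z else 0)"

definition pderiv :: "nat \<Rightarrow> (pt \<Rightarrow> real) \<Rightarrow> pt \<Rightarrow> real" where
  "pderiv a f z = frechet_derivative f (at z) (coordvec a)"

text \<open>Exterior derivative of the 1-form sum_a eta_a dz^a.\<close>
definition dform1 :: "(nat \<Rightarrow> pt \<Rightarrow> real) \<Rightarrow> pt \<Rightarrow> vec2" where
  "dform1 \<eta> z = (\<chi> c. case pair_of c of (a,b) \<Rightarrow> pderiv a (\<eta> b) z - pderiv b (\<eta> a) z)"

definition boundary_free :: "pt set \<Rightarrow> current2 \<Rightarrow> bool" where
  "boundary_free W T \<longleftrightarrow> (\<forall>\<eta>. (\<forall>a<4. \<eta> a \<in> test_funs W) \<longrightarrow> T (dform1 \<eta>) = 0)"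

definition hausdorff2_delta :: "real \<Rightarrow> pt set \<Rightarrow> ennreal" where
  "hausdorff2_delta \<delta> A = (INF C \<in> {C :: nat \<Rightarrow> pt set. A \<subseteq> (\<Union>j. C j) \<and>
        (\<forall>j. bounded (C j) \<and> diameter (C j) \<le> \<delta>)}.
        (\<Sum>j. ennreal (pi / 4 * (diameter (C j))\<^sup>2)))"

definition hausdorff2_outer :: "pt set \<Rightarrow> ennreal" where
  "hausdorff2_outer A = (SUP \<delta> \<in> {0<..}. hausdorff2_delta \<delta> A)"

definition H2 :: "pt measure" where
  "H2 = completion (measure_of UNIV (sets borel) hausdorff2_outer)"

definition C1_immersion :: "(complex \<Rightarrow> pt) \<Rightarrow> complex set \<Rightarrow> bool" where
  "C1_immersion \<phi> U \<longleftrightarrow> open U \<and> inj_on \<phi> U \<and> (\<forall>p\<in>U. \<phi> differentiable (at p)) \<and>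
     continuous_on U (\<lambda>p. frechet_derivative \<phi> (at p) 1) \<and>
     continuous_on U (\<lambda>p. frechet_derivative \<phi> (at p) \<i>) \<and>
     (\<forall>p\<in>U. wedge (frechet_derivative \<phi> (at p) 1) (frechet_derivative \<phi> (at p) \<i>) \<noteq> 0)"

text \<open>T(omega) = int_M <omega, xi> theta dH^2 with M countably 2-rectifiable
  (covered up to an H^2-null set by countably many C^1 embedded surfaces),
  theta positive integer valued and locally H^2-integrable, xi a unit 2-vector
  orienting the tangent plane H^2-a.e. on M.\<close>
definition imr_rep :: "pt set \<Rightarrow> current2 \<Rightarrow> pt set \<Rightarrow> (pt \<Rightarrow> nat) \<Rightarrow> (pt \<Rightarrow> vec2) \<Rightarrow> bool" where
  "imr_rep W T M \<theta> \<xi> \<longleftrightarrow>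
     M \<subseteq> W \<and> M \<in> sets H2 \<and>
     (\<lambda>z. real (\<theta> z)) \<in> borel_measurable H2 \<and> \<xi> \<in> borel_measurable H2 \<and>
     (\<forall>z\<in>M. \<theta> z \<ge> 1) \<and>
     (\<forall>K. compact K \<and> K \<subseteq> W \<longrightarrow> (\<integral>\<^sup>+ z. indicator (M \<inter> K) z * ennreal (real (\<theta> z)) \<partial>H2) < \<infinity>) \<and>
     (\<exists>N \<phi> U. N \<in> null_sets H2 \<and> (\<forall>j::nat. C1_immersion (\<phi> j) (U j)) \<and>
        M \<subseteq> N \<union> (\<Union>j. \<phi> j ` U j) \<and>
        (AE z in H2. z \<in> M \<longrightarrow> norm (\<xi> z) = 1 \<and>
           (\<forall>j. \<forall>p\<in>U j. \<phi> j p = z \<longrightarrow>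
              (let w = wedge (frechet_derivative (\<phi> j) (at p) 1) (frechet_derivative (\<phi> j) (at p) \<i>)
               in \<xi> z = (1 / norm w) *\<^sub>R w \<or> \<xi> z = - ((1 / norm w) *\<^sub>R w))))) \<and>
     (\<forall>\<omega>\<in>test_forms W. T \<omega> = (\<integral> z. indicator M z * real (\<theta> z) * (\<omega> z \<bullet> \<xi> z) \<partial>H2))"

definition cart :: "complex set \<Rightarrow> current2 \<Rightarrow> bool" where
  "cart \<Omega> T \<longleftrightarrow>
     (\<exists>M \<theta> \<xi>. imr_rep (\<Omega> \<times> UNIV) T M \<theta> \<xi> \<and>
        (\<exists>K. \<forall>\<phi>\<in>test_funs (\<Omega> \<times> UNIV). (\<forall>z. \<bar>\<phi> z\<bar> \<le> 1) \<longrightarrow>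
            (\<integral> z. indicator M z * real (\<theta> z) * (\<phi> z * norm (snd z) * \<xi> z $ DX12) \<partial>H2) \<le> K)) \<and>
     boundary_free (\<Omega> \<times> UNIV) T \<and>
     (\<forall>\<psi>\<in>test_funs \<Omega>. \<forall>\<zeta>\<in>test_funs (UNIV :: complex set).
        (\<exists>V. open V \<and> sphere 0 1 \<subseteq> V \<and> (\<forall>y\<in>V. \<zeta> y = 1)) \<longrightarrow>
        T (form_comp DX12 (\<lambda>z. \<psi> (fst z) * \<zeta> (snd z))) = (\<integral> x. indicator \<Omega> x * \<psi> x \<partial>lborel)) \<and>
     (\<forall>\<phi>\<in>test_funs (\<Omega> \<times> UNIV). (\<forall>z. \<phi> z \<ge> 0) \<longrightarrow> T (form_comp DX12 \<phi>) \<ge> 0) \<and>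
     (\<exists>K. \<forall>\<omega>\<in>test_forms (\<Omega> \<times> UNIV). (\<forall>z. norm (\<omega> z) \<le> 1) \<longrightarrow> T \<omega> \<le> K) \<and>
     (\<forall>\<omega>\<in>test_forms (\<Omega> \<times> UNIV). tsupp \<omega> \<inter> (closure \<Omega> \<times> sphere 0 1) = {} \<longrightarrow> T \<omega> = 0)"

text \<open>Such a pair is
  unique (mu = |T|, xi = Tvec mu-a.e.).\<close>
definition polar_rep :: "pt set \<Rightarrow> current2 \<Rightarrow> pt measure \<Rightarrow> (pt \<Rightarrow> vec2) \<Rightarrow> bool" where
  "polar_rep W T \<mu> \<xi> \<longleftrightarrow> sets \<mu> = sets borel \<and> emeasure \<mu> (- W) = 0 \<and>
     (\<forall>K. compact K \<and> K \<subseteq> W \<longrightarrow> emeasure \<mu> K < \<infinity>) \<and>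
     \<xi> \<in> borel_measurable borel \<and> (AE z in \<mu>. norm (\<xi> z) = 1) \<and>
     (\<forall>\<omega>\<in>test_forms W. T \<omega> = (\<integral> z. \<omega> z \<bullet> \<xi> z \<partial>\<mu>))"

definition lipschitz_boundary :: "complex set \<Rightarrow> bool" where
  "lipschitz_boundary \<Omega> \<longleftrightarrow> (\<forall>p\<in>frontier \<Omega>. \<exists>r>0. \<exists>c g L. norm c = 1 \<and> L-lipschitz_on UNIV g \<and>
      (\<forall>z\<in>ball p r. z \<in> \<Omega> \<longleftrightarrow> Im (c * (z - p)) < g (Re (c * (z - p)))))"

definition lat :: "real \<Rightarrow> int \<times> int \<Rightarrow> complex" where
  "lat \<epsilon> i = Complex (\<epsilon> * of_int (fst i)) (\<epsilon> * of_int (snd i))"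

definition theta :: "nat \<Rightarrow> real" where
  "theta N = 2 * pi / real N"

definition clock_set :: "nat \<Rightarrow> complex set" where
  "clock_set N = {cis (real k * theta N) | k. k < N}"

definition energy :: "complex set \<Rightarrow> real \<Rightarrow> (int \<times> int \<Rightarrow> complex) \<Rightarrow> real" where
  "energy \<Omega> \<epsilon> u = 1/2 * (\<Sum>(i,j) \<in> {(i,j). \<bar>fst i - fst j\<bar> + \<bar>snd i - snd j\<bar> = 1 \<and>
        lat \<epsilon> i \<in> \<Omega> \<and> lat \<epsilon> j \<in> \<Omega>}. \<epsilon>\<^sup>2 * (cmod (u i - u j))\<^sup>2)"

definition interp :: "real \<Rightarrow> (int \<times> int \<Rightarrow> complex) \<Rightarrow> complex \<Rightarrow> complex" where
  "interp \<epsilon> u x = u (\<lfloor>Re x / \<epsilon>\<rfloor>, \<lfloor>Im x / \<epsilon>\<rfloor>)"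

text \<open>Integral of phi(x,.) dy^m (m = 1,2) along the oriented geodesic arc from a to b,
  gamma(t) = a cis(t alpha), alpha = Arg(b/a) in (-pi,pi] (anticlockwise if antipodal).\<close>
definition arc_int :: "(pt \<Rightarrow> real) \<Rightarrow> complex \<Rightarrow> nat \<Rightarrow> complex \<Rightarrow> complex \<Rightarrow> real" where
  "arc_int \<phi> x m a b = (let \<alpha> = Arg (b / a) in
      integral {0..1} (\<lambda>t. \<phi> (x, a * cis (t * \<alpha>)) *
        (if m = 1 then Re (\<i> * \<alpha> * a * cis (t * \<alpha>)) else Im (\<i> * \<alpha> * a * cis (t * \<alpha>)))))"

text \<open>Integrand on the jump set: sum over l,m of (-1)^(2-l) (int_gamma omega_{lm} dy^m) nu^l,
  where omega_{lm} is the coefficient of d xhat^l /\ dy^m.\<close>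
definition jump_density :: "(pt \<Rightarrow> vec2) \<Rightarrow> complex \<Rightarrow> real \<times> real \<Rightarrow> complex \<Rightarrow> complex \<Rightarrow> real" where
  "jump_density \<omega> x \<nu> a b =
     snd \<nu> * (arc_int (\<lambda>z. \<omega> z $ DX1Y1) x 1 a b + arc_int (\<lambda>z. \<omega> z $ DX1Y2) x 2 a b)
   - fst \<nu> * (arc_int (\<lambda>z. \<omega> z $ DX2Y1) x 1 a b + arc_int (\<lambda>z. \<omega> z $ DX2Y2) x 2 a b)"

text \<open>The jump set consists of
  lattice edges: the right edge of the square of i (normal e1, u^- = u i,
  u^+ = u (i+e1)) and its top edge (normal e2, u^- = u i, u^+ = u (i+e2)); only
  points in Omega count, and H^1 on an edge is length measure.\<close>
definition G_cur :: "complex set \<Rightarrow> real \<Rightarrow> (int \<times> int \<Rightarrow> complex) \<Rightarrow> current2" where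
  "G_cur \<Omega> \<epsilon> u \<omega> =
     (\<integral> x. indicator \<Omega> x * \<omega> (x, interp \<epsilon> u x) $ DX12 \<partial>lborel)
   + (\<Sum>i \<in> {i. \<exists>s\<in>{0..1}. \<exists>t\<in>{0..1}. Complex (\<epsilon> * (of_int (fst i) + s)) (\<epsilon> * (of_int (snd i) + t)) \<in> \<Omega>}.
        (if u i \<noteq> u (fst i + 1, snd i) then
          (\<integral> s. indicator {\<epsilon> * of_int (snd i) ..< \<epsilon> * (of_int (snd i) + 1)} s *
             indicator \<Omega> (Complex (\<epsilon> * (of_int (fst i) + 1)) s) *
             jump_density \<omega> (Complex (\<epsilon> * (of_int (fst i) + 1)) s) (1, 0) (u i) (u (fst i + 1, snd i)) \<partial>lborel)
         else 0)
      + (if u i \<noteq> u (fst i, snd i + 1) then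
          (\<integral> s. indicator {\<epsilon> * of_int (fst i) ..< \<epsilon> * (of_int (fst i) + 1)} s *
             indicator \<Omega> (Complex s (\<epsilon> * (of_int (snd i) + 1))) *
             jump_density \<omega> (Complex s (\<epsilon> * (of_int (snd i) + 1))) (0, 1) (u i) (u (fst i, snd i + 1)) \<partial>lborel)
         else 0))"

end

(*
  Phi is the support function of the convex set of admissible 2-covectors, i.e. those without
  dx1/\dx2 and dy1/\dy2 components whose two blocks (w^{l1}, w^{l2}) lie in the closed unit disk.
  So if a current G has polar representation G = xi |G|, then G(omega) <= int_V Phi(xi) d|G| for
  every admissible test form omega supported in V, and weak convergence turns this into
  T(omega) <= liminf int_V Phi(xi_eps) d|G_eps|.  Conversely, on a compact K inside V the mass
  int_K Phi(xi) d|T| is approximated by such T(omega): the pointwise maximiser of w . xi is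
  approximated by a simple admissible field, and each of its level sets by a smooth bump, the
  bumps having disjoint supports (inner and outer regularity of |T|).  Exhausting V by compact
  sets gives the claim.
*)
theory Submission
  imports Defs
begin

lemma Ck_Suc_imp_Ck: "Ck (Suc n) f \<Longrightarrow> Ck n f"
proof (induction n arbitrary: f)
  case 0
  then show ?case
    by (auto intro!: continuous_at_imp_continuous_on differentiable_imp_continuous_within)
qed simp

lemma smooth_imp_Ck: "smooth f \<Longrightarrow> Ck n f"
  by (simp add: smooth_def)

lemma Ck_Suc_has_derivative:
  "Ck (Suc n) f \<Longrightarrow> (f has_derivative frechet_derivative f (at x)) (at x)"
  by (simp add: frechet_derivative_works[symmetric])

lemma Ck_SucI:
  assumes "\<And>x. (f has_derivative f' x) (at x)" and "\<And>v. Ck n (\<lambda>x. f' x v)"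
  shows "Ck (Suc n) f"
proof -
  have "frechet_derivative f (at x) = f' x" for x
    using frechet_derivative_at[OF assms(1)] by simp
  then show ?thesis
    using assms by (auto intro: differentiableI)
qed

lemma Ck_const: "Ck n (\<lambda>x. c)"
  by (induction n arbitrary: c) simp_all

lemma Ck_add:
  assumes "Ck n f" "Ck n g"
  shows "Ck n (\<lambda>x. f x + g x)"
  using assms
proof (induction n arbitrary: f g)
  case 0
  then show ?case by (auto intro: continuous_on_add)
next
  case (Suc n)
  show ?case
    by (rule Ck_SucI[OF has_derivative_add[OF Ck_Suc_has_derivative Ck_Suc_has_derivative]])
      (use Suc in auto)
qed

lemma Ck_sum:
  assumes "finite S" "\<And>i. i \<in> S \<Longrightarrow> Ck n (f i)"
  shows "Ck n (\<lambda>x. \<Sum>i\<in>S. f i x)"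
  using assms by (induction S rule: finite_induct) (auto intro: Ck_add Ck_const)

lemma Ck_bounded_linear_comp:
  assumes "bounded_linear L" "Ck n f"
  shows "Ck n (\<lambda>x. L (f x))"
  using assms(2)
proof (induction n arbitrary: f)
  case 0
  then show ?case
    using assms(1) by (auto intro: continuous_on_compose2[OF linear_continuous_on])
next
  case (Suc n)
  show ?case
    by (rule Ck_SucI[OF bounded_linear.has_derivative[OF assms(1) Ck_Suc_has_derivative]])
      (use Suc in auto)
qed

lemma Ck_bounded_linear:
  assumes "bounded_linear L"
  shows "Ck n L"
proof (cases n)
  case 0
  then show ?thesis using assms by (simp add: linear_continuous_on)
next
  case (Suc m)
  show ?thesis
    unfolding Suc by (rule Ck_SucI[OF bounded_linear.has_derivative[OF assms has_derivative_ident]])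
      (rule Ck_const)
qed

lemma Ck_mult:
  fixes f g :: "'a::real_normed_vector \<Rightarrow> real"
  assumes "Ck n f" "Ck n g"
  shows "Ck n (\<lambda>x. f x * g x)"
  using assms
proof (induction n arbitrary: f g)
  case 0
  then show ?case by (auto intro: continuous_on_mult)
next
  case (Suc n)
  have "Ck n f" "Ck n g"
    using Suc.prems by (auto intro: Ck_Suc_imp_Ck)
  then show ?case
    using Suc
    by (intro Ck_SucI[OF has_derivative_mult[OF Ck_Suc_has_derivative Ck_Suc_has_derivative]]
        Ck_add) auto
qed

lemma Ck_diff:
  fixes f g :: "'a::real_normed_vector \<Rightarrow> real"
  assumes "Ck n f" "Ck n g"
  shows "Ck n (\<lambda>x. f x - g x)"
  using Ck_add[OF assms(1) Ck_mult[OF Ck_const assms(2), of "-1"]] by simp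

lemma Ck_compose:
  fixes h :: "real \<Rightarrow> real" and g :: "'a::real_normed_vector \<Rightarrow> real"
  assumes "Ck n h" "Ck n g"
  shows "Ck n (\<lambda>x. h (g x))"
  using assms
proof (induction n arbitrary: h g)
  case 0
  then show ?case by (auto intro: continuous_on_compose2)
next
  case (Suc n)
  have h': "(h has_derivative frechet_derivative h (at t)) (at t)" for t
    using Suc.prems(1) by (rule Ck_Suc_has_derivative)
  have g': "(g has_derivative frechet_derivative g (at x)) (at x)" for x
    using Suc.prems(2) by (rule Ck_Suc_has_derivative)
  have "frechet_derivative h (at (g x)) (frechet_derivative g (at x) v)
      = frechet_derivative g (at x) v * frechet_derivative h (at (g x)) 1" for x v
    using linear_scale_real[OF has_derivative_linear[OF h'[of "g x"]], of "frechet_derivative g (at x) v" 1]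
    by simp
  then have chain: "((\<lambda>x. h (g x)) has_derivative
      (\<lambda>v. frechet_derivative g (at x) v * frechet_derivative h (at (g x)) 1)) (at x)" for x
    using diff_chain_at[OF g' h'] by (simp add: o_def)
  have "Ck n (\<lambda>t. frechet_derivative h (at t) 1)"
    using Suc.prems(1) by simp
  then have "Ck n (\<lambda>x. frechet_derivative h (at (g x)) 1)"
    using Suc.IH[of "\<lambda>t. frechet_derivative h (at t) 1" g] Ck_Suc_imp_Ck[OF Suc.prems(2)] by simp
  moreover have "Ck n (\<lambda>x. frechet_derivative g (at x) v)" for v
    using Suc.prems(2) by simp
  ultimately show ?case
    by (intro Ck_SucI[OF chain] Ck_mult)
qed

lemma Ck_scaled_exp: "Ck n (\<lambda>t::real. c * exp (a * t))"
proof (induction n arbitrary: c)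
  case 0
  then show ?case by (auto intro!: continuous_intros)
next
  case (Suc n)
  have "((\<lambda>t. c * exp (a * t)) has_real_derivative (c * a * exp (a * x))) (at x)" for x
    by (auto intro!: derivative_eq_intros)
  then have "((\<lambda>t. c * exp (a * t)) has_derivative (\<lambda>v. (v * c * a) * exp (a * x))) (at x)" for x
    by (rule has_derivative_eq_rhs[OF has_field_derivative_imp_has_derivative]) (simp add: fun_eq_iff)
  then show ?case
    by (rule Ck_SucI) (rule Suc.IH)
qed

lemma Ck_inner_self_diff: "Ck n (\<lambda>z::'a::real_inner. (z - c) \<bullet> (z - c))"
proof (cases n)
  case 0
  then show ?thesis by (auto intro!: continuous_intros)
next
  case (Suc m)
  have "((\<lambda>z. (z - c) \<bullet> (z - c)) has_derivative (\<lambda>v. (z - c) \<bullet> v + v \<bullet> (z - c))) (at z)" for z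
    by (auto intro!: derivative_eq_intros)
  moreover have "(\<lambda>v. (z - c) \<bullet> v + v \<bullet> (z - c)) = (\<lambda>v. 2 * (z \<bullet> v) + (- 2 * (c \<bullet> v)))" for z
    by (auto simp: inner_diff_left inner_diff_right inner_commute)
  ultimately have "((\<lambda>z. (z - c) \<bullet> (z - c)) has_derivative (\<lambda>v. 2 * (z \<bullet> v) + (- 2 * (c \<bullet> v)))) (at z)" for z
    by simp
  then show ?thesis
    unfolding Suc
    by (rule Ck_SucI) (rule Ck_add[OF Ck_mult[OF Ck_const Ck_bounded_linear[OF bounded_linear_inner_left]] Ck_const])
qed

lemma borel_measurable_smooth: "smooth f \<Longrightarrow> f \<in> borel_measurable borel"
  using smooth_imp_Ck[of f 0] by (simp add: borel_measurable_continuous_onI)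

definition exp_inv_pow :: "nat \<Rightarrow> real \<Rightarrow> real" where
  "exp_inv_pow k t = (if t > 0 then inverse t ^ k * exp (- inverse t) else 0)"

lemma exp_inv_pow_tendsto_0: "(exp_inv_pow k \<longlongrightarrow> 0) (at_right 0)"
proof -
  have "((\<lambda>t. (\<lambda>s. s ^ k / exp s) (inverse t)) \<longlongrightarrow> (0::real)) (at_right 0)"
    by (rule filterlim_compose[OF tendsto_power_div_exp_0 filterlim_inverse_at_top_right])
  moreover have ev: "eventually (\<lambda>t. inverse t ^ k / exp (inverse t) = exp_inv_pow k t) (at_right 0)"
    by (rule eventually_mono[OF eventually_at_right_less[of 0]])
      (auto simp: exp_inv_pow_def exp_minus divide_inverse)
  ultimately show ?thesis
    using tendsto_cong[OF ev] by simp
qed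

lemma exp_inv_pow_has_real_derivative:
  "(exp_inv_pow k has_real_derivative (exp_inv_pow (k + 2) t - real k * exp_inv_pow (k + 1) t)) (at t)"
proof -
  consider "t > 0" | "t < 0" | "t = 0" by linarith
  then show ?thesis
  proof cases
    case 1
    have "((\<lambda>s. inverse s ^ k * exp (- inverse s)) has_real_derivative
        (real k * inverse t ^ (k - 1) * (- inverse (t * t)) * exp (- inverse t)
          + inverse t ^ k * (exp (- inverse t) * inverse (t * t)))) (at t)"
      using 1 by (auto intro!: derivative_eq_intros simp: power2_eq_square)
    moreover have "real k * inverse t ^ (k - 1) * (- inverse (t * t)) * exp (- inverse t)
        + inverse t ^ k * (exp (- inverse t) * inverse (t * t))
        = exp_inv_pow (k + 2) t - real k * exp_inv_pow (k + 1) t"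
    proof (cases k)
      case 0
      then show ?thesis using 1 by (simp add: exp_inv_pow_def inverse_mult_distrib)
    next
      case (Suc m)
      then show ?thesis using 1 by (simp add: exp_inv_pow_def inverse_mult_distrib algebra_simps)
    qed
    ultimately have "((\<lambda>s. inverse s ^ k * exp (- inverse s)) has_real_derivative
        (exp_inv_pow (k + 2) t - real k * exp_inv_pow (k + 1) t)) (at t)"
      by simp
    then show ?thesis
      by (rule has_field_derivative_transform_within_open[where S = "{0<..}"])
        (use 1 in \<open>auto simp: exp_inv_pow_def\<close>)
  next
    case 2
    have "((\<lambda>s. 0) has_real_derivative (exp_inv_pow (k + 2) t - real k * exp_inv_pow (k + 1) t)) (at t)"
      using 2 by (simp add: exp_inv_pow_def)
    then show ?thesis
      by (rule has_field_derivative_transform_within_open[where S = "{..<0}"])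
        (use 2 in \<open>auto simp: exp_inv_pow_def\<close>)
  next
    case 3
    have "((\<lambda>y. (exp_inv_pow k y - exp_inv_pow k 0) / (y - 0)) \<longlongrightarrow> 0) (at 0)"
    proof (subst filterlim_at_split, rule conjI)
      show "((\<lambda>y. (exp_inv_pow k y - exp_inv_pow k 0) / (y - 0)) \<longlongrightarrow> 0) (at_left 0)"
        by (rule tendsto_eventually)
          (unfold eventually_at_filter, rule always_eventually, auto simp: exp_inv_pow_def)
      have ev: "eventually (\<lambda>y. exp_inv_pow (Suc k) y = (exp_inv_pow k y - exp_inv_pow k 0) / (y - 0)) (at_right 0)"
        by (rule eventually_mono[OF eventually_at_right_less[of 0]])
          (auto simp: exp_inv_pow_def divide_inverse mult_ac)
      then show "((\<lambda>y. (exp_inv_pow k y - exp_inv_pow k 0) / (y - 0)) \<longlongrightarrow> 0) (at_right 0)"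
        using exp_inv_pow_tendsto_0[of "Suc k"] tendsto_cong[OF ev] by simp
    qed
    then show ?thesis
      using 3 by (simp add: has_field_derivative_iff exp_inv_pow_def)
  qed
qed

lemma Ck_exp_inv_pow: "Ck n (exp_inv_pow k)"
proof (induction n arbitrary: k)
  case 0
  then show ?case
    using exp_inv_pow_has_real_derivative
    by (auto intro!: continuous_at_imp_continuous_on DERIV_isCont)
next
  case (Suc n)
  have "(exp_inv_pow k has_derivative
      (\<lambda>v. v * (exp_inv_pow (k + 2) x - real k * exp_inv_pow (k + 1) x))) (at x)" for x
    by (rule has_derivative_eq_rhs[OF exp_inv_pow_has_real_derivative[THEN has_field_derivative_imp_has_derivative]])
      (simp add: fun_eq_iff)
  then show ?case
    by (rule Ck_SucI) (rule Ck_mult[OF Ck_const Ck_diff[OF Suc.IH Ck_mult[OF Ck_const Suc.IH]]])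
qed

definition bump :: "'a::real_inner \<Rightarrow> real \<Rightarrow> 'a \<Rightarrow> real" where
  "bump c r z = exp_inv_pow 0 (r\<^sup>2 - (z - c) \<bullet> (z - c))"

lemma Ck_bump: "Ck n (bump c r)"
  unfolding bump_def[abs_def]
  by (rule Ck_compose[OF Ck_exp_inv_pow Ck_diff[OF Ck_const Ck_inner_self_diff]])

lemma bump_nonneg: "bump c r z \<ge> 0"
  by (simp add: bump_def exp_inv_pow_def)

lemma bump_pos_iff:
  assumes "r > 0"
  shows "bump c r z > 0 \<longleftrightarrow> dist z c < r"
proof -
  have "(z - c) \<bullet> (z - c) = (dist z c)\<^sup>2"
    by (simp add: dist_norm power2_norm_eq_inner)
  moreover have "(dist z c)\<^sup>2 < r\<^sup>2 \<longleftrightarrow> dist z c < r"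
  proof
    assume "(dist z c)\<^sup>2 < r\<^sup>2"
    then show "dist z c < r"
      by (rule power_less_imp_less_base) (use assms in simp)
  next
    assume "dist z c < r"
    then show "(dist z c)\<^sup>2 < r\<^sup>2"
      by (rule power_strict_mono) auto
  qed
  ultimately show ?thesis
    by (simp add: bump_def exp_inv_pow_def)
qed

lemma zero_outside_tsupp: "z \<notin> tsupp f \<Longrightarrow> f z = 0"
  using closure_subset[of "{x. f x \<noteq> 0}"] by (auto simp: tsupp_def)

lemma tsupp_subset_closed:
  assumes "closed S" "\<And>z. f z \<noteq> 0 \<Longrightarrow> z \<in> S"
  shows "tsupp f \<subseteq> S"
  unfolding tsupp_def by (rule closure_minimal) (use assms in auto)

lemma compact_tsupp_if_subset:
  fixes f :: "'a::heine_borel \<Rightarrow> 'b::zero"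
  shows "compact S \<Longrightarrow> tsupp f \<subseteq> S \<Longrightarrow> compact (tsupp f)"
  by (metis bounded_subset closed_closure compact_eq_bounded_closed tsupp_def)

lemma smooth_positive_on_compact:
  fixes C :: "'a::{real_inner,heine_borel} set"
  assumes "compact C" "r > 0"
  obtains \<phi> :: "'a \<Rightarrow> real"
  where "smooth \<phi>" "\<And>z. 0 \<le> \<phi> z" "\<And>z. z \<in> C \<Longrightarrow> 0 < \<phi> z" "compact (tsupp \<phi>)"
    "tsupp \<phi> \<subseteq> (\<Union>c\<in>C. cball c r)"
proof -
  obtain D where D: "D \<subseteq> C" "finite D" "C \<subseteq> (\<Union>c\<in>D. ball c r)"
  proof -
    have "C \<subseteq> (\<Union>c\<in>C. ball c r)"
      using assms(2) by force
    from compactE_image[OF assms(1) _ this] that show ?thesis by blast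
  qed
  define \<phi> where "\<phi> z = (\<Sum>c\<in>D. bump c r z)" for z
  show ?thesis
  proof (rule that[of \<phi>])
    show "smooth \<phi>"
      unfolding smooth_def \<phi>_def[abs_def] using D(2) by (auto intro!: Ck_sum Ck_bump)
    show "0 \<le> \<phi> z" for z
      unfolding \<phi>_def by (intro sum_nonneg bump_nonneg)
    show "0 < \<phi> z" if z: "z \<in> C" for z
    proof -
      obtain c where c: "c \<in> D" "dist z c < r"
        using D(3) z by (force simp: dist_commute)
      have "0 < bump c r z"
        using c assms(2) bump_pos_iff by blast
      also have "\<dots> \<le> \<phi> z"
        unfolding \<phi>_def by (rule member_le_sum) (use c D bump_nonneg in auto)
      finally show ?thesis .
    qed
    have "tsupp \<phi> \<subseteq> (\<Union>c\<in>D. cball c r)"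
    proof (rule tsupp_subset_closed)
      show "closed (\<Union>c\<in>D. cball c r)"
        using D(2) by (intro closed_UN) auto
      fix z
      assume "\<phi> z \<noteq> 0"
      then obtain c where "c \<in> D" "bump c r z \<noteq> 0"
        unfolding \<phi>_def by (auto elim: sum.not_neutral_contains_not_neutral)
      moreover from this(2) have "dist z c < r"
        using bump_nonneg[of c r z] bump_pos_iff[OF assms(2)] by force
      ultimately show "z \<in> (\<Union>c\<in>D. cball c r)"
        by (force simp: dist_commute)
    qed
    moreover have "compact (\<Union>c\<in>D. cball c r)"
      using D(2) by (intro compact_UN) auto
    ultimately show "compact (tsupp \<phi>)" "tsupp \<phi> \<subseteq> (\<Union>c\<in>C. cball c r)"
      using compact_tsupp_if_subset D(1) by blast+
  qed
qed

lemma smooth_urysohn: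
  fixes C U :: "'a::{real_inner,heine_borel} set"
  assumes "compact C" "open U" "C \<subseteq> U" "\<delta> > 0"
  obtains \<psi> :: "'a \<Rightarrow> real"
  where "smooth \<psi>" "\<And>z. 0 \<le> \<psi> z" "\<And>z. \<psi> z \<le> 1" "\<And>z. z \<in> C \<Longrightarrow> 1 - \<delta> \<le> \<psi> z"
    "compact (tsupp \<psi>)" "tsupp \<psi> \<subseteq> U"
proof (cases "C = {}")
  case True
  show ?thesis
    by (rule that[of "\<lambda>z. 0"]) (auto simp: True smooth_def Ck_const tsupp_def)
next
  case False
  obtain r where r: "r > 0" "(\<Union>c\<in>C. cball c r) \<subseteq> U"
    using compact_subset_open_imp_cball_epsilon_subset[OF assms(1-3)] by blast
  obtain \<phi> :: "'a \<Rightarrow> real" where \<phi>: "smooth \<phi>" "\<And>z. 0 \<le> \<phi> z" "\<And>z. z \<in> C \<Longrightarrow> 0 < \<phi> z"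
    "compact (tsupp \<phi>)" "tsupp \<phi> \<subseteq> (\<Union>c\<in>C. cball c r)"
    using smooth_positive_on_compact[OF assms(1) r(1)] by blast
  obtain z0 where z0: "z0 \<in> C" "\<And>z. z \<in> C \<Longrightarrow> \<phi> z0 \<le> \<phi> z"
    using continuous_attains_inf[OF assms(1) False continuous_on_subset[OF smooth_imp_Ck[OF \<phi>(1), of 0, simplified]]]
    by blast
  define M where "M = (\<bar>ln \<delta>\<bar> + 1) / \<phi> z0"
  have M: "M > 0" "M * \<phi> z0 = \<bar>ln \<delta>\<bar> + 1"
    using \<phi>(3)[OF z0(1)] by (auto simp: M_def)
  define \<psi> where "\<psi> z = 1 - exp (- M * \<phi> z)" for z
  show ?thesis
  proof (rule that[of \<psi>])
    show "smooth \<psi>"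
      unfolding smooth_def
    proof
      fix n
      have "Ck n (\<lambda>t. 1 - 1 * exp (- M * t))"
        by (rule Ck_diff[OF Ck_const Ck_scaled_exp])
      from Ck_compose[OF this smooth_imp_Ck[OF \<phi>(1)]] show "Ck n \<psi>"
        by (simp add: \<psi>_def[abs_def])
    qed
    show "0 \<le> \<psi> z" for z
      using M(1) \<phi>(2)[of z] by (simp add: \<psi>_def)
    show "\<psi> z \<le> 1" for z
      by (simp add: \<psi>_def)
    show "1 - \<delta> \<le> \<psi> z" if "z \<in> C" for z
    proof -
      have "\<bar>ln \<delta>\<bar> + 1 \<le> M * \<phi> z"
        using M z0(2)[OF that] by (metis mult_left_mono less_imp_le)
      then have "exp (- M * \<phi> z) \<le> exp (ln \<delta>)"
        by simp
      then show ?thesis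
        using assms(4) by (simp add: \<psi>_def)
    qed
    have "tsupp \<psi> \<subseteq> tsupp \<phi>"
      by (rule tsupp_subset_closed) (auto simp: \<psi>_def tsupp_def intro: closure_subset[THEN subsetD])
    then show "compact (tsupp \<psi>)" "tsupp \<psi> \<subseteq> U"
      using \<phi>(4,5) r(2) compact_tsupp_if_subset by blast+
  qed
qed

section \<open>Admissible covectors and the dual description of Phi\<close>

definition admissible :: "vec2 \<Rightarrow> bool" where
  "admissible w \<longleftrightarrow> w$DX12 = 0 \<and> w$DY12 = 0 \<and>
     (w$DX1Y1)\<^sup>2 + (w$DX1Y2)\<^sup>2 \<le> 1 \<and> (w$DX2Y1)\<^sup>2 + (w$DX2Y2)\<^sup>2 \<le> 1"

definition Phi1 :: "vec2 \<Rightarrow> real" where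
  "Phi1 w = sqrt ((w$DX1Y1)\<^sup>2 + (w$DX1Y2)\<^sup>2)"

definition Phi2 :: "vec2 \<Rightarrow> real" where
  "Phi2 w = sqrt ((w$DX2Y1)\<^sup>2 + (w$DX2Y2)\<^sup>2)"

lemma Phi_eq_Phi1_plus_Phi2: "Phi w = Phi1 w + Phi2 w"
  by (simp add: Phi_def Phi1_def Phi2_def)

lemma Phi_nonneg: "Phi w \<ge> 0"
  by (simp add: Phi_def)

lemma continuous_on_Phi: "continuous_on UNIV Phi"
  unfolding Phi_def by (intro continuous_intros)

lemma borel_measurable_Phi: "Phi \<in> borel_measurable borel"
  by (rule borel_measurable_continuous_onI[OF continuous_on_Phi])

lemma inner_vec2:
  "(x::vec2) \<bullet> y = x$DX12 * y$DX12 + x$DX1Y1 * y$DX1Y1 + x$DX1Y2 * y$DX1Y2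
     + x$DX2Y1 * y$DX2Y1 + x$DX2Y2 * y$DX2Y2 + x$DY12 * y$DY12"
  by (simp add: inner_vec_def UNIV_cov2 algebra_simps)

lemma unit_disk_pairing_le:
  fixes a b x y :: real
  assumes "a\<^sup>2 + b\<^sup>2 \<le> 1"
  shows "a * x + b * y \<le> sqrt (x\<^sup>2 + y\<^sup>2)"
proof -
  have "a * x + b * y = Complex a b \<bullet> Complex x y"
    by (simp add: inner_complex_def)
  also have "\<dots> \<le> cmod (Complex a b) * cmod (Complex x y)"
    by (rule norm_cauchy_schwarz)
  also have "\<dots> \<le> cmod (Complex x y)"
    using assms by (intro mult_left_le_one_le) (auto simp: cmod_def)
  finally show ?thesis
    by (simp add: cmod_def)
qed

lemma admissible_inner_le_Phi:
  assumes "admissible w"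
  shows "w \<bullet> x \<le> Phi x"
  using unit_disk_pairing_le[of "w$DX1Y1" "w$DX1Y2" "x$DX1Y1" "x$DX1Y2"]
    unit_disk_pairing_le[of "w$DX2Y1" "w$DX2Y2" "x$DX2Y1" "x$DX2Y2"] assms
  by (simp add: inner_vec2 Phi_def admissible_def)

lemma admissible_zero: "admissible 0"
  by (simp add: admissible_def)

lemma admissible_scaleR:
  assumes "admissible w" "0 \<le> t" "t \<le> 1"
  shows "admissible (t *\<^sub>R w)"
proof -
  have "t\<^sup>2 \<le> 1"
    using assms(2,3) by (simp add: power_le_one)
  then have "t\<^sup>2 * ((w$DX1Y1)\<^sup>2 + (w$DX1Y2)\<^sup>2) \<le> 1 * 1" "t\<^sup>2 * ((w$DX2Y1)\<^sup>2 + (w$DX2Y2)\<^sup>2) \<le> 1 * 1"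
    using assms(1) by (intro mult_mono; simp add: admissible_def)+
  then show ?thesis
    using assms(1) by (simp add: admissible_def power_mult_distrib algebra_simps)
qed

lemma abs_inner_admissible_le:
  assumes "admissible w" "norm x \<le> 1"
  shows "\<bar>w \<bullet> x\<bar> \<le> 2"
proof -
  have "w \<bullet> w \<le> 2"
    using assms(1) by (simp add: inner_vec2 admissible_def power2_eq_square)
  then have "(norm w)\<^sup>2 \<le> 2\<^sup>2"
    by (simp add: power2_norm_eq_inner)
  then have "norm w \<le> 2"
    by (rule power2_le_imp_le) simp
  then have "norm w * norm x \<le> 2 * 1"
    using assms(2) by (intro mult_mono) auto
  then show ?thesis
    using Cauchy_Schwarz_ineq2[of w x] by linarith
qed

lemma sum_squares_divide_le_1:
  fixes a b M :: real
  assumes "sqrt (a\<^sup>2 + b\<^sup>2) \<le> M" "M > 0"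
  shows "(a / M)\<^sup>2 + (b / M)\<^sup>2 \<le> 1"
proof -
  have "sqrt (a\<^sup>2 + b\<^sup>2) ^ 2 \<le> M\<^sup>2"
    using assms(1) by (rule power_mono) simp
  then have "a\<^sup>2 + b\<^sup>2 \<le> M\<^sup>2"
    by simp
  then show ?thesis
    using assms(2) by (simp add: power_divide add_divide_distrib[symmetric])
qed

text \<open>A vanishing block of \<open>x\<close> yields a zero block of \<open>Phi_dual x\<close>, since division by zero
  gives zero.\<close>
definition Phi_dual :: "vec2 \<Rightarrow> vec2" where
  "Phi_dual x = (\<chi> c. if c = DX1Y1 \<or> c = DX1Y2 then x$c / Phi1 x
                       else if c = DX2Y1 \<or> c = DX2Y2 then x$c / Phi2 x else 0)"

lemma admissible_Phi_dual: "admissible (Phi_dual x)"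
proof -
  have "(a / sqrt (a\<^sup>2 + b\<^sup>2))\<^sup>2 + (b / sqrt (a\<^sup>2 + b\<^sup>2))\<^sup>2 \<le> 1" for a b :: real
    by (cases "a = 0 \<and> b = 0") (auto intro!: sum_squares_divide_le_1 simp: sum_power2_gt_zero_iff)
  then show ?thesis
    by (simp add: admissible_def Phi_dual_def Phi1_def Phi2_def)
qed

lemma Phi_dual_inner: "Phi_dual x \<bullet> x = Phi x"
proof -
  have pair: "a * (a / s) + b * (b / s) = s" if "s = sqrt (a\<^sup>2 + b\<^sup>2)" for a b s :: real
  proof (cases "s = 0")
    case False
    then have "a * (a / s) + b * (b / s) = s\<^sup>2 / s"
      using that by (simp add: power2_eq_square add_divide_distrib)
    then show ?thesis
      using False by (simp add: power2_eq_square)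
  qed simp
  show ?thesis
    using pair[OF Phi1_def] pair[OF Phi2_def]
    by (simp add: inner_vec2 Phi_dual_def Phi_eq_Phi1_plus_Phi2 algebra_simps)
qed

lemma Phi_le_2: "norm x \<le> 1 \<Longrightarrow> Phi x \<le> 2"
  using abs_inner_admissible_le[OF admissible_Phi_dual] Phi_dual_inner by (metis abs_le_D1)

lemma borel_measurable_Phi_dual: "Phi_dual \<in> borel_measurable borel"
proof (subst borel_measurable_euclidean_space, intro ballI)
  fix b :: vec2
  assume "b \<in> Basis"
  then obtain i where b: "b = axis i 1"
    by (auto simp: Basis_vec_def)
  show "(\<lambda>x. Phi_dual x \<bullet> b) \<in> borel_measurable borel"
    unfolding b inner_axis Phi_dual_def Phi1_def Phi2_def by (cases i) simp_all
qed

definition admissible_proj :: "vec2 \<Rightarrow> vec2" where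
  "admissible_proj w = (\<chi> c. if c = DX1Y1 \<or> c = DX1Y2 then w$c / max 1 (Phi1 w)
                             else if c = DX2Y1 \<or> c = DX2Y2 then w$c / max 1 (Phi2 w) else 0)"

lemma admissible_admissible_proj: "admissible (admissible_proj w)"
  using sum_squares_divide_le_1[of "w$DX1Y1" "w$DX1Y2" "max 1 (Phi1 w)"]
    sum_squares_divide_le_1[of "w$DX2Y1" "w$DX2Y2" "max 1 (Phi2 w)"]
  by (simp add: admissible_def admissible_proj_def Phi1_def Phi2_def)

lemma admissible_proj_eq:
  assumes "admissible w"
  shows "admissible_proj w = w"
proof -
  have "Phi1 w \<le> 1" "Phi2 w \<le> 1"
    using assms by (auto simp: admissible_def Phi1_def Phi2_def)
  then show ?thesis
    using assms unfolding admissible_proj_def admissible_def vec_eq_iff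
    by (intro allI, case_tac i) auto
qed

lemma continuous_on_admissible_proj: "continuous_on UNIV admissible_proj"
  unfolding admissible_proj_def Phi1_def Phi2_def
proof (intro continuous_on_vec_lambda)
  fix c :: cov2
  show "continuous_on UNIV (\<lambda>x::vec2. if c = DX1Y1 \<or> c = DX1Y2
      then x $ c / max 1 (sqrt ((x $ DX1Y1)\<^sup>2 + (x $ DX1Y2)\<^sup>2))
      else if c = DX2Y1 \<or> c = DX2Y2 then x $ c / max 1 (sqrt ((x $ DX2Y1)\<^sup>2 + (x $ DX2Y2)\<^sup>2))
      else 0)"
    by (cases c) (auto intro!: continuous_intros)
qed

lemma admissible_disjoint_combination:
  fixes \<psi> :: "vec2 \<Rightarrow> 'a::euclidean_space \<Rightarrow> real"
  assumes "finite R" "\<And>w. w \<in> R \<Longrightarrow> admissible w" "\<And>w. w \<in> R \<Longrightarrow> smooth (\<psi> w)"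
    "\<And>w z. w \<in> R \<Longrightarrow> 0 \<le> \<psi> w z" "\<And>w z. w \<in> R \<Longrightarrow> \<psi> w z \<le> 1"
    "\<And>w. w \<in> R \<Longrightarrow> compact (tsupp (\<psi> w))" "disjoint_family_on (\<lambda>w. tsupp (\<psi> w)) R"
  defines "\<omega> \<equiv> \<lambda>z. \<Sum>w\<in>R. \<psi> w z *\<^sub>R w"
  shows "smooth \<omega>" "tsupp \<omega> \<subseteq> (\<Union>w\<in>R. tsupp (\<psi> w))" "compact (tsupp \<omega>)" "admissible (\<omega> z)"
proof -
  show "smooth \<omega>"
    unfolding smooth_def \<omega>_def
    using assms(1,3) by (auto intro!: Ck_sum Ck_bounded_linear_comp[OF bounded_linear_scaleR_left]
        simp: smooth_def)
  show tsupp: "tsupp \<omega> \<subseteq> (\<Union>w\<in>R. tsupp (\<psi> w))"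
  proof (rule tsupp_subset_closed)
    show "closed (\<Union>w\<in>R. tsupp (\<psi> w))"
      using assms(1) by (intro closed_UN) (auto simp: tsupp_def)
    fix z
    assume "\<omega> z \<noteq> 0"
    then obtain w where "w \<in> R" "\<psi> w z \<noteq> 0"
      unfolding \<omega>_def by (auto elim: sum.not_neutral_contains_not_neutral)
    then show "z \<in> (\<Union>w\<in>R. tsupp (\<psi> w))"
      using zero_outside_tsupp by blast
  qed
  show "compact (tsupp \<omega>)"
    using tsupp assms(1,6) by (intro compact_tsupp_if_subset[OF compact_UN]) auto
  show "admissible (\<omega> z)"
  proof (cases "\<exists>w\<in>R. z \<in> tsupp (\<psi> w)")
    case True
    then obtain w where w: "w \<in> R" "z \<in> tsupp (\<psi> w)"
      by blast
    have "\<psi> w' z = 0" if "w' \<in> R" "w' \<noteq> w" for w'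
      using assms(7) w that by (intro zero_outside_tsupp) (auto simp: disjoint_family_on_def)
    then have "\<omega> z = \<psi> w z *\<^sub>R w"
      unfolding \<omega>_def using assms(1) w(1) by (subst sum.remove) (auto intro!: sum.neutral)
    then show ?thesis
      using w(1) assms(2,4,5) by (simp add: admissible_scaleR)
  next
    case False
    then have "\<psi> w z = 0" if "w \<in> R" for w
      using that by (blast intro: zero_outside_tsupp)
    then have "\<omega> z = 0"
      unfolding \<omega>_def by (auto intro!: sum.neutral)
    then show ?thesis
      by (simp add: admissible_zero)
  qed
qed

section \<open>Smooth approximation of indicator functions\<close>

lemma emeasure_density_indicator:
  assumes "sets \<mu> = sets borel" "L \<in> sets borel" "A \<in> sets borel"
  shows "emeasure (density \<mu> (indicator L)) A = emeasure \<mu> (A \<inter> L)"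
proof -
  have "(indicator L :: _ \<Rightarrow> ennreal) \<in> borel_measurable \<mu>"
    using assms(1,2) by (simp add: measurable_cong_sets[OF assms(1) refl] borel_measurable_indicator)
  then have "emeasure (density \<mu> (indicator L)) A = (\<integral>\<^sup>+ x. indicator L x * indicator A x \<partial>\<mu>)"
    by (rule emeasure_density) (simp add: assms(1,3))
  also have "\<dots> = (\<integral>\<^sup>+ x. indicator (A \<inter> L) x \<partial>\<mu>)"
    by (intro nn_integral_cong) (auto simp: indicator_def)
  also have "\<dots> = emeasure \<mu> (A \<inter> L)"
    using assms by (intro nn_integral_indicator) auto
  finally show ?thesis .
qed

lemma finite_density_indicator:
  assumes "sets \<mu> = sets borel" "L \<in> sets borel" "emeasure \<mu> L < \<infinity>"
  shows "sets (density \<mu> (indicator L)) = sets borel"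
    and "emeasure (density \<mu> (indicator L)) (space (density \<mu> (indicator L))) \<noteq> \<infinity>"
proof -
  show sets: "sets (density \<mu> (indicator L)) = sets borel"
    using assms(1) by simp
  have "space (density \<mu> (indicator L)) = UNIV"
    using sets_eq_imp_space_eq[OF sets] by simp
  then show "emeasure (density \<mu> (indicator L)) (space (density \<mu> (indicator L))) \<noteq> \<infinity>"
    using emeasure_density_indicator[OF assms(1,2), of UNIV] assms(3) by simp
qed

lemma inner_compact_approx:
  fixes \<mu> :: "'a::{second_countable_topology,complete_space} measure"
  assumes sets: "sets \<mu> = sets borel" and E: "E \<in> sets borel" "emeasure \<mu> E < \<infinity>" and "e > 0"
  obtains C where "compact C" "C \<subseteq> E" "measure \<mu> E \<le> measure \<mu> C + e"
proof -
  let ?\<nu> = "density \<mu> (indicator E)"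
  have \<nu>: "emeasure ?\<nu> A = ennreal (measure \<mu> A)" if "A \<in> sets borel" "A \<subseteq> E" for A
  proof -
    have "emeasure \<mu> A \<le> emeasure \<mu> E"
      using that(2) E(1) sets by (intro emeasure_mono) auto
    then have "A \<in> fmeasurable \<mu>"
      using E(2) that(1) sets by (intro fmeasurableI) auto
    then show ?thesis
      using emeasure_density_indicator[OF sets E(1) that(1)] that(2)
      by (simp add: Int_absorb2 emeasure_eq_measure2)
  qed
  show ?thesis
  proof (cases "measure \<mu> E \<le> e")
    case True
    then show ?thesis
      by (intro that[of "{}"]) auto
  next
    case False
    have "ennreal (measure \<mu> E - e) < emeasure ?\<nu> E"
      using False \<open>e > 0\<close> \<nu>[OF E(1)] by (simp add: ennreal_less_iff)
    also have "emeasure ?\<nu> E = (SUP C \<in> {C. C \<subseteq> E \<and> compact C}. emeasure ?\<nu> C)"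
      using finite_density_indicator[OF sets E] E(1) by (rule inner_regular)
    finally obtain C where C: "C \<subseteq> E" "compact C" "ennreal (measure \<mu> E - e) < emeasure ?\<nu> C"
      unfolding less_SUP_iff by blast
    then have "measure \<mu> E - e < measure \<mu> C"
      using False \<nu>[OF borel_compact[OF C(2)] C(1)] by (simp add: ennreal_less_iff)
    then show ?thesis
      using C by (intro that[of C]) auto
  qed
qed

lemma outer_open_approx:
  fixes \<mu> :: "'a::{second_countable_topology,complete_space} measure"
  assumes sets: "sets \<mu> = sets borel" and S: "open S" "emeasure \<mu> S < \<infinity>"
    and B: "B \<in> sets borel" "B \<subseteq> S" and "e > 0"
  obtains U where "open U" "B \<subseteq> U" "U \<subseteq> S" "measure \<mu> U \<le> measure \<mu> B + e"
proof -
  let ?\<nu> = "density \<mu> (indicator S)"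
  have \<nu>: "emeasure ?\<nu> A = ennreal (measure \<mu> (A \<inter> S))" if "A \<in> sets borel" for A
  proof -
    have "emeasure \<mu> (A \<inter> S) \<le> emeasure \<mu> S"
      using S(1) sets by (intro emeasure_mono) auto
    then have "A \<inter> S \<in> fmeasurable \<mu>"
      using S that sets by (intro fmeasurableI) auto
    then show ?thesis
      using emeasure_density_indicator[OF sets borel_open[OF S(1)] that]
      by (simp add: emeasure_eq_measure2)
  qed
  have "emeasure ?\<nu> B < ennreal (measure \<mu> B + e)"
    using \<nu>[OF B(1)] B(2) \<open>e > 0\<close> by (simp add: Int_absorb2 ennreal_less_iff)
  also have "emeasure ?\<nu> B = (INF U \<in> {U. B \<subseteq> U \<and> open U}. emeasure ?\<nu> U)"
    using finite_density_indicator[OF sets borel_open[OF S(1)] S(2)] B(1) by (rule outer_regular)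
  finally obtain U where U: "B \<subseteq> U" "open U" "emeasure ?\<nu> U < ennreal (measure \<mu> B + e)"
    unfolding INF_less_iff by blast
  then have "measure \<mu> (U \<inter> S) \<le> measure \<mu> B + e"
    using \<nu>[OF borel_open[OF U(2)]] by (simp add: ennreal_less_iff)
  then show ?thesis
    using U S B by (intro that[of "U \<inter> S"]) auto
qed

lemma integrable_bounded_vanishing_outside:
  fixes f :: "'a \<Rightarrow> real"
  assumes "f \<in> borel_measurable \<mu>" "S \<in> sets \<mu>" "emeasure \<mu> S < \<infinity>"
    and "AE z in \<mu>. \<bar>f z\<bar> \<le> B" "\<And>z. z \<notin> S \<Longrightarrow> f z = 0"
  shows "integrable \<mu> f"
proof (rule Bochner_Integration.integrable_bound)
  show "integrable \<mu> (\<lambda>z. \<bar>B\<bar> * indicator S z)"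
    using assms(2,3) by (intro integrable_mult_right integrable_real_indicator) auto
  show "AE z in \<mu>. norm (f z) \<le> norm (\<bar>B\<bar> * indicator S z :: real)"
    using assms(4) by eventually_elim (use assms(5) in \<open>auto simp: indicator_def\<close>)
qed (use assms(1) in simp)

lemma smooth_indicator_approx:
  fixes \<mu> :: "'a::euclidean_space measure"
  assumes sets: "sets \<mu> = sets borel" and U: "open U" "emeasure \<mu> U < \<infinity>"
    and C: "compact C" "C \<subseteq> U" "C \<subseteq> E" and E: "E \<in> sets borel" "emeasure \<mu> E < \<infinity>"
    and "e > 0"
  obtains \<psi> where "smooth \<psi>" "\<And>z. 0 \<le> \<psi> z" "\<And>z. \<psi> z \<le> 1" "compact (tsupp \<psi>)" "tsupp \<psi> \<subseteq> U"
    "(\<integral> z. \<bar>\<psi> z - indicator E z\<bar> \<partial>\<mu>) \<le> measure \<mu> E - measure \<mu> C + e"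
proof -
  have C_borel: "C \<in> sets borel"
    using C(1) by (rule borel_compact)
  obtain U' where U': "open U'" "C \<subseteq> U'" "U' \<subseteq> U" "measure \<mu> U' \<le> measure \<mu> C + e / 2"
    using outer_open_approx[OF sets U C_borel C(2)] \<open>e > 0\<close> by (metis half_gt_zero)
  define \<delta> where "\<delta> = e / (2 * (measure \<mu> U + 1))"
  have \<delta>: "\<delta> > 0" "\<delta> * (measure \<mu> U + 1) = e / 2"
  proof -
    have "measure \<mu> U + 1 > 0"
      using measure_nonneg[of \<mu> U] by linarith
    then show "\<delta> > 0" "\<delta> * (measure \<mu> U + 1) = e / 2"
      using \<open>e > 0\<close> by (simp_all add: \<delta>_def field_simps)
  qed
  then have \<delta>_measure: "\<delta> * measure \<mu> U \<le> e / 2"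
    by (simp add: algebra_simps)
  obtain \<psi> where \<psi>: "smooth \<psi>" "\<And>z. 0 \<le> \<psi> z" "\<And>z. \<psi> z \<le> 1" "\<And>z. z \<in> C \<Longrightarrow> 1 - \<delta> \<le> \<psi> z"
    "compact (tsupp \<psi>)" "tsupp \<psi> \<subseteq> U'"
    using smooth_urysohn[OF C(1) U'(1,2) \<delta>(1)] by blast
  have fin: "A \<in> fmeasurable \<mu>" if "A \<in> sets borel" "A \<subseteq> U \<or> A \<subseteq> E" for A
  proof -
    have "emeasure \<mu> A < \<infinity>"
      using that U E sets emeasure_mono[of A U \<mu>] emeasure_mono[of A E \<mu>] borel_open[OF U(1)]
      by (auto simp: le_less_trans)
    then show ?thesis
      using that sets by (intro fmeasurableI) auto
  qed
  have fm: "E - C \<in> fmeasurable \<mu>" "U \<in> fmeasurable \<mu>" "U' - C \<in> fmeasurable \<mu>" "U' \<in> fmeasurable \<mu>"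
    using C_borel E(1) U'(1,3) U(1) by (auto intro!: fin)
  define g where "g z = indicator (E - C) z + \<delta> * indicator U z + indicator (U' - C) z" for z
  have g_int: "integrable \<mu> g"
    unfolding g_def using fm
    by (intro Bochner_Integration.integrable_add integrable_mult_right integrable_real_indicator)
      (auto simp: fmeasurable_def)
  have g_nonneg: "g z \<ge> 0" for z
    using \<delta>(1) by (simp add: g_def)
  have bound: "\<bar>\<psi> z - indicator E z\<bar> \<le> g z" for z
  proof -
    have "\<psi> z = 0" if "z \<notin> U'"
      using \<psi>(6) that by (blast intro: zero_outside_tsupp)
    then show ?thesis
      using \<psi>(2,3,4)[of z] C U'(2,3) \<delta>(1) by (auto simp: g_def indicator_def)
  qed
  have "(\<integral> z. \<bar>\<psi> z - indicator E z\<bar> \<partial>\<mu>) \<le> (\<integral> z. g z \<partial>\<mu>)"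
    using g_int bound g_nonneg by (rule integral_mono')
  also have "(\<integral> z. g z \<partial>\<mu>) = measure \<mu> (E - C) + \<delta> * measure \<mu> U + measure \<mu> (U' - C)"
    unfolding g_def using fm
    by (subst Bochner_Integration.integral_add Bochner_Integration.integral_add;
        auto intro!: Bochner_Integration.integrable_add integrable_mult_right integrable_real_indicator
          simp: fmeasurable_def)+
  also have "measure \<mu> (U' - C) = measure \<mu> U' - measure \<mu> C"
    using fm(4) U'(2) C_borel sets by (intro measure_Diff) (auto simp: fmeasurable_def)
  also have "measure \<mu> (E - C) = measure \<mu> E - measure \<mu> C"
    using E C(3) C_borel sets by (intro measure_Diff) auto
  finally have "(\<integral> z. \<bar>\<psi> z - indicator E z\<bar> \<partial>\<mu>) \<le> measure \<mu> E - measure \<mu> C + e"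
    using \<delta>_measure U'(4) by linarith
  with \<psi> U'(3) show ?thesis
    by (intro that) auto
qed

lemma finite_disjoint_compacts_separated:
  fixes C :: "'i \<Rightarrow> 'a::heine_borel set"
  assumes "finite I" "\<And>i. i \<in> I \<Longrightarrow> compact (C i)" "disjoint_family_on C I"
  obtains s where "s > 0"
    "\<And>i j x y. i \<in> I \<Longrightarrow> j \<in> I \<Longrightarrow> i \<noteq> j \<Longrightarrow> x \<in> C i \<Longrightarrow> y \<in> C j \<Longrightarrow> s \<le> dist x y"
proof -
  define P where "P = {(i, j). i \<in> I \<and> j \<in> I \<and> i \<noteq> j \<and> C i \<noteq> {} \<and> C j \<noteq> {}}"
  define s where "s = Min (insert 1 ((\<lambda>(i, j). setdist (C i) (C j)) ` P))"
  have "P \<subseteq> I \<times> I"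
    by (auto simp: P_def)
  then have "finite P"
    using assms(1) by (auto intro: finite_subset)
  then have fin: "finite (insert 1 ((\<lambda>(i, j). setdist (C i) (C j)) ` P))"
    by simp
  have "setdist (C i) (C j) > 0" if "(i, j) \<in> P" for i j
    using that assms(2,3) by (subst setdist_gt_0_compact_closed)
      (auto simp: P_def disjoint_family_on_def intro: compact_imp_closed)
  then have "s > 0"
    unfolding s_def using fin by (subst Min_gr_iff) auto
  moreover have "s \<le> dist x y"
    if "i \<in> I" "j \<in> I" "i \<noteq> j" "x \<in> C i" "y \<in> C j" for i j x y
  proof -
    have "(i, j) \<in> P"
      using that by (auto simp: P_def)
    then have "s \<le> setdist (C i) (C j)"
      unfolding s_def using fin by (intro Min_le) force+
    also have "\<dots> \<le> dist x y"
      using that(4,5) by (rule setdist_le_dist)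
    finally show ?thesis .
  qed
  ultimately show ?thesis
    using that by blast
qed

lemma finite_disjoint_compacts_neighbourhoods:
  fixes C :: "'i \<Rightarrow> 'a::heine_borel set"
  assumes "finite I" "\<And>i. i \<in> I \<Longrightarrow> compact (C i)" "disjoint_family_on C I"
  obtains U where "\<And>i. open (U i)" "\<And>i. C i \<subseteq> U i" "disjoint_family_on U I"
proof -
  obtain s where s: "s > 0"
    "\<And>i j x y. i \<in> I \<Longrightarrow> j \<in> I \<Longrightarrow> i \<noteq> j \<Longrightarrow> x \<in> C i \<Longrightarrow> y \<in> C j \<Longrightarrow> s \<le> dist x y"
    using finite_disjoint_compacts_separated[OF assms] by blast
  define U where "U i = (\<Union>c\<in>C i. ball c (s / 2))" for i
  show ?thesis
  proof (rule that[of U])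
    show "open (U i)" for i
      by (auto simp: U_def)
    show "C i \<subseteq> U i" for i
      unfolding U_def using s(1) by (intro subsetI UN_I) auto
    show "disjoint_family_on U I"
      unfolding disjoint_family_on_def
    proof (intro ballI impI equals0I)
      fix i j z
      assume ij: "i \<in> I" "j \<in> I" "i \<noteq> j" and "z \<in> U i \<inter> U j"
      then obtain x y where xy: "x \<in> C i" "y \<in> C j" "dist x z < s / 2" "dist y z < s / 2"
        by (auto simp: U_def)
      then have "dist x y < s"
        using dist_triangle_half_l[of x z s y] by (simp add: dist_commute)
      then show False
        using s(2)[OF ij xy(1,2)] by simp
    qed
  qed
qed

lemma smooth_disjoint_indicators_approx:
  fixes \<mu> :: "'a::euclidean_space measure" and e :: real
  assumes sets: "sets \<mu> = sets borel" and S: "open S" "emeasure \<mu> S < \<infinity>" and "finite I"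
    and E: "\<And>i. i \<in> I \<Longrightarrow> E i \<in> sets borel" "\<And>i. i \<in> I \<Longrightarrow> E i \<subseteq> S" "disjoint_family_on E I"
    and "e > 0"
  obtains \<psi> where "\<And>i. i \<in> I \<Longrightarrow> smooth (\<psi> i)" "\<And>i z. i \<in> I \<Longrightarrow> 0 \<le> \<psi> i z"
    "\<And>i z. i \<in> I \<Longrightarrow> \<psi> i z \<le> 1" "\<And>i. i \<in> I \<Longrightarrow> compact (tsupp (\<psi> i))"
    "\<And>i. i \<in> I \<Longrightarrow> tsupp (\<psi> i) \<subseteq> S" "disjoint_family_on (\<lambda>i. tsupp (\<psi> i)) I"
    "\<And>i. i \<in> I \<Longrightarrow> (\<integral> z. \<bar>\<psi> i z - indicator (E i) z\<bar> \<partial>\<mu>) \<le> e"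
proof -
  have E_fin: "emeasure \<mu> (E i) < \<infinity>" if "i \<in> I" for i
    using emeasure_mono[OF E(2)[OF that], of \<mu>] sets borel_open[OF S(1)] S(2) by (auto intro: le_less_trans)
  have "\<forall>i\<in>I. \<exists>C. compact C \<and> C \<subseteq> E i \<and> measure \<mu> (E i) \<le> measure \<mu> C + e / 2"
    using inner_compact_approx[OF sets E(1) E_fin half_gt_zero[OF \<open>e > 0\<close>]] by blast
  then have "\<exists>C. \<forall>i\<in>I. compact (C i) \<and> C i \<subseteq> E i \<and> measure \<mu> (E i) \<le> measure \<mu> (C i) + e / 2"
    by (rule bchoice)
  then obtain C where C: "\<And>i. i \<in> I \<Longrightarrow> compact (C i)" "\<And>i. i \<in> I \<Longrightarrow> C i \<subseteq> E i"
    "\<And>i. i \<in> I \<Longrightarrow> measure \<mu> (E i) \<le> measure \<mu> (C i) + e / 2"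
    by blast
  have "disjoint_family_on C I"
    using E(3) C(2) by (fastforce simp: disjoint_family_on_def)
  then obtain U where U: "\<And>i. open (U i)" "\<And>i. C i \<subseteq> U i" "disjoint_family_on U I"
    using finite_disjoint_compacts_neighbourhoods[of I C] \<open>finite I\<close> C(1) by blast
  have "\<forall>i\<in>I. \<exists>p. smooth p \<and> (\<forall>z. 0 \<le> p z \<and> p z \<le> 1) \<and> compact (tsupp p) \<and> tsupp p \<subseteq> U i \<inter> S
      \<and> (\<integral> z. \<bar>p z - indicator (E i) z\<bar> \<partial>\<mu>) \<le> e"
  proof
    fix i
    assume i: "i \<in> I"
    have "emeasure \<mu> (U i \<inter> S) \<le> emeasure \<mu> S"
      using S(1) sets by (intro emeasure_mono) auto
    then have "emeasure \<mu> (U i \<inter> S) < \<infinity>"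
      using S(2) by (rule le_less_trans)
    moreover have "C i \<subseteq> U i \<inter> S"
      using U(2) C(2)[OF i] E(2)[OF i] by blast
    ultimately obtain p where p: "smooth p" "\<And>z. 0 \<le> p z" "\<And>z. p z \<le> 1" "compact (tsupp p)"
      "tsupp p \<subseteq> U i \<inter> S"
      "(\<integral> z. \<bar>p z - indicator (E i) z\<bar> \<partial>\<mu>) \<le> measure \<mu> (E i) - measure \<mu> (C i) + e / 2"
      using smooth_indicator_approx[OF sets open_Int[OF U(1) S(1)] _ C(1)[OF i] _ C(2)[OF i] E(1)[OF i]
          E_fin[OF i] half_gt_zero[OF \<open>e > 0\<close>]] by blast
    then show "\<exists>p. smooth p \<and> (\<forall>z. 0 \<le> p z \<and> p z \<le> 1) \<and> compact (tsupp p) \<and> tsupp p \<subseteq> U i \<inter> S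
      \<and> (\<integral> z. \<bar>p z - indicator (E i) z\<bar> \<partial>\<mu>) \<le> e"
      using C(3)[OF i] by (intro exI[of _ p]) auto
  qed
  then have "\<exists>\<psi>. \<forall>i\<in>I. smooth (\<psi> i) \<and> (\<forall>z. 0 \<le> \<psi> i z \<and> \<psi> i z \<le> 1) \<and> compact (tsupp (\<psi> i))
      \<and> tsupp (\<psi> i) \<subseteq> U i \<inter> S \<and> (\<integral> z. \<bar>\<psi> i z - indicator (E i) z\<bar> \<partial>\<mu>) \<le> e"
    by (rule bchoice)
  then obtain \<psi> where \<psi>: "\<And>i. i \<in> I \<Longrightarrow> smooth (\<psi> i)" "\<And>i z. i \<in> I \<Longrightarrow> 0 \<le> \<psi> i z"
    "\<And>i z. i \<in> I \<Longrightarrow> \<psi> i z \<le> 1" "\<And>i. i \<in> I \<Longrightarrow> compact (tsupp (\<psi> i))"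
    "\<And>i. i \<in> I \<Longrightarrow> tsupp (\<psi> i) \<subseteq> U i \<inter> S"
    "\<And>i. i \<in> I \<Longrightarrow> (\<integral> z. \<bar>\<psi> i z - indicator (E i) z\<bar> \<partial>\<mu>) \<le> e"
    by blast
  have "disjoint_family_on (\<lambda>i. tsupp (\<psi> i)) I"
    using U(3) \<psi>(5) by (fastforce simp: disjoint_family_on_def)
  with \<psi> show ?thesis
    by (intro that) auto
qed

section \<open>Approximation of the Phi-mass by admissible test forms\<close>

lemma simple_admissible_approx:
  fixes \<xi> :: "'a \<Rightarrow> vec2" and e :: real
  assumes \<xi>: "\<xi> \<in> borel_measurable \<mu>" "AE z in \<mu>. norm (\<xi> z) = 1"
    and K: "K \<in> sets \<mu>" "emeasure \<mu> K < \<infinity>" and "e > 0"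
  obtains G where "simple_function \<mu> G" "\<And>z. admissible (G z)"
    "(\<integral> z. indicator K z * Phi (\<xi> z) \<partial>\<mu>) \<le> (\<integral> z. indicator K z * (G z \<bullet> \<xi> z) \<partial>\<mu>) + e"
proof -
  have dual_meas: "(\<lambda>z. Phi_dual (\<xi> z)) \<in> borel_measurable \<mu>"
    using measurable_compose[OF \<xi>(1) borel_measurable_Phi_dual] by (simp add: o_def)
  obtain F where F: "\<And>i. simple_function \<mu> (F i)"
    "\<And>z. z \<in> space \<mu> \<Longrightarrow> (\<lambda>i. F i z) \<longlonglongrightarrow> Phi_dual (\<xi> z)"
    using borel_measurable_implies_sequence_metric[OF dual_meas, of 0] by blast
  define G where "G i = admissible_proj \<circ> F i" for i
  have G_simple: "simple_function \<mu> (G i)" for i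
    unfolding G_def using F(1) by simp
  have "(\<lambda>i. G i z) \<longlonglongrightarrow> Phi_dual (\<xi> z)" if "z \<in> space \<mu>" for z
    using isCont_tendsto_compose[OF _ F(2)[OF that], of admissible_proj]
      continuous_on_admissible_proj admissible_proj_eq[OF admissible_Phi_dual]
    by (simp add: G_def continuous_on_eq_continuous_at)
  then have "AE z in \<mu>. (\<lambda>i. indicator K z * (G i z \<bullet> \<xi> z)) \<longlonglongrightarrow> indicator K z * Phi (\<xi> z)"
    by (intro AE_I2) (auto intro!: tendsto_intros simp: Phi_dual_inner[symmetric])
  moreover have "AE z in \<mu>. norm (indicator K z * (G i z \<bullet> \<xi> z)) \<le> 2 * indicator K z" for i
    using \<xi>(2) by eventually_elim
      (use abs_inner_admissible_le[OF admissible_admissible_proj] in \<open>auto simp: G_def indicator_def\<close>)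
  moreover have "integrable \<mu> (\<lambda>z. 2 * indicator K z :: real)"
    using K by (intro integrable_mult_right integrable_real_indicator) auto
  ultimately have "(\<lambda>i. \<integral> z. indicator K z * (G i z \<bullet> \<xi> z) \<partial>\<mu>) \<longlonglongrightarrow> (\<integral> z. indicator K z * Phi (\<xi> z) \<partial>\<mu>)"
    using K(1) \<xi>(1) borel_measurable_simple_function[OF G_simple]
    by (intro integral_dominated_convergence[where w = "\<lambda>z. 2 * indicator K z"])
      (auto intro!: borel_measurable_times borel_measurable_indicator borel_measurable_inner
        measurable_compose[OF \<xi>(1) borel_measurable_Phi])
  then obtain i where "dist (\<integral> z. indicator K z * (G i z \<bullet> \<xi> z) \<partial>\<mu>) (\<integral> z. indicator K z * Phi (\<xi> z) \<partial>\<mu>) < e"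
    using \<open>e > 0\<close> by (auto simp: lim_sequentially)
  then show ?thesis
    using G_simple[of i] admissible_admissible_proj
    by (intro that[of "G i"]) (auto simp: G_def dist_real_def)
qed

lemma integral_indicator_combination_le:
  fixes \<xi> :: "'a \<Rightarrow> vec2" and \<psi> :: "vec2 \<Rightarrow> 'a \<Rightarrow> real"
  assumes \<xi>: "\<xi> \<in> borel_measurable \<mu>" "AE z in \<mu>. norm (\<xi> z) = 1"
    and S: "S \<in> sets \<mu>" "emeasure \<mu> S < \<infinity>" and R: "finite R" "\<And>w. w \<in> R \<Longrightarrow> admissible w"
    and E: "\<And>w. w \<in> R \<Longrightarrow> E w \<in> sets \<mu>" "\<And>w. w \<in> R \<Longrightarrow> E w \<subseteq> S"
    and \<psi>: "\<And>w. w \<in> R \<Longrightarrow> \<psi> w \<in> borel_measurable \<mu>" "\<And>w z. w \<in> R \<Longrightarrow> 0 \<le> \<psi> w z"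
      "\<And>w z. w \<in> R \<Longrightarrow> \<psi> w z \<le> 1" "\<And>w z. w \<in> R \<Longrightarrow> z \<notin> S \<Longrightarrow> \<psi> w z = 0"
  shows "(\<integral> z. (\<Sum>w\<in>R. indicator (E w) z *\<^sub>R w) \<bullet> \<xi> z \<partial>\<mu>)
    \<le> (\<integral> z. (\<Sum>w\<in>R. \<psi> w z *\<^sub>R w) \<bullet> \<xi> z \<partial>\<mu>) + (\<Sum>w\<in>R. 2 * (\<integral> z. \<bar>\<psi> w z - indicator (E w) z\<bar> \<partial>\<mu>))"
proof -
  have coeff_int: "integrable \<mu> (\<lambda>z. c z * (w \<bullet> \<xi> z))"
    if "w \<in> R" "c \<in> borel_measurable \<mu>" "\<And>z. 0 \<le> c z" "\<And>z. c z \<le> 1" "\<And>z. z \<notin> S \<Longrightarrow> c z = 0"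
    for w c
  proof (rule integrable_bounded_vanishing_outside[OF _ S, where B = 2])
    show "(\<lambda>z. c z * (w \<bullet> \<xi> z)) \<in> borel_measurable \<mu>"
      using that(2) \<xi>(1) by measurable
    show "AE z in \<mu>. \<bar>c z * (w \<bullet> \<xi> z)\<bar> \<le> 2"
      using \<xi>(2)
    proof eventually_elim
      case (elim z)
      have "\<bar>c z\<bar> * \<bar>w \<bullet> \<xi> z\<bar> \<le> 1 * 2"
        using that(3,4)[of z] abs_inner_admissible_le[OF R(2)[OF that(1)]] elim
        by (intro mult_mono) auto
      then show ?case
        by (simp add: abs_mult)
    qed
  qed (use that(5) in simp)
  have ind_int: "integrable \<mu> (\<lambda>z. indicator (E w) z * (w \<bullet> \<xi> z))" if "w \<in> R" for w
    using that E[OF that] by (intro coeff_int) (auto simp: indicator_def)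
  have \<psi>_int: "integrable \<mu> (\<lambda>z. \<psi> w z * (w \<bullet> \<xi> z))" if "w \<in> R" for w
    using that \<psi> by (intro coeff_int) auto
  have err_int: "integrable \<mu> (\<lambda>z. \<bar>\<psi> w z - indicator (E w) z\<bar>)" if "w \<in> R" for w
    using that E[OF that] \<psi>[OF that]
    by (intro integrable_bounded_vanishing_outside[OF _ S, where B = 1]) (auto simp: indicator_def)
  have pointwise: "AE z in \<mu>. (\<Sum>w\<in>R. indicator (E w) z * (w \<bullet> \<xi> z))
      \<le> (\<Sum>w\<in>R. \<psi> w z * (w \<bullet> \<xi> z) + 2 * \<bar>\<psi> w z - indicator (E w) z\<bar>)"
    using \<xi>(2)
  proof eventually_elim
    case (elim z)
    show ?case
    proof (rule sum_mono)
      fix w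
      assume w: "w \<in> R"
      have "(indicator (E w) z - \<psi> w z) * (w \<bullet> \<xi> z) \<le> \<bar>\<psi> w z - indicator (E w) z\<bar> * \<bar>w \<bullet> \<xi> z\<bar>"
        by (metis abs_ge_self abs_minus_commute abs_mult)
      also have "\<dots> \<le> \<bar>\<psi> w z - indicator (E w) z\<bar> * 2"
        using abs_inner_admissible_le[OF R(2)[OF w]] elim by (intro mult_left_mono) auto
      finally show "indicator (E w) z * (w \<bullet> \<xi> z) \<le> \<psi> w z * (w \<bullet> \<xi> z) + 2 * \<bar>\<psi> w z - indicator (E w) z\<bar>"
        by (simp add: algebra_simps)
    qed
  qed
  have "(\<integral> z. (\<Sum>w\<in>R. indicator (E w) z * (w \<bullet> \<xi> z)) \<partial>\<mu>)
      \<le> (\<integral> z. (\<Sum>w\<in>R. \<psi> w z * (w \<bullet> \<xi> z) + 2 * \<bar>\<psi> w z - indicator (E w) z\<bar>) \<partial>\<mu>)"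
    using pointwise ind_int \<psi>_int err_int by (intro integral_mono_AE) auto
  also have "\<dots> = (\<integral> z. (\<Sum>w\<in>R. \<psi> w z * (w \<bullet> \<xi> z)) \<partial>\<mu>)
      + (\<Sum>w\<in>R. 2 * (\<integral> z. \<bar>\<psi> w z - indicator (E w) z\<bar> \<partial>\<mu>))"
    using \<psi>_int err_int by (simp add: sum.distrib integral_sum)
  finally show ?thesis
    by (simp add: inner_sum_left)
qed

lemma indicator_scaleR_eq_sum_level_sets:
  fixes G :: "'a \<Rightarrow> 'b::real_vector"
  assumes "finite (range G)"
  shows "indicator K z *\<^sub>R G z = (\<Sum>w\<in>range G. indicator (G -` {w} \<inter> K) z *\<^sub>R w)"
proof -
  have "(\<Sum>w\<in>range G. indicator (G -` {w} \<inter> K) z *\<^sub>R w)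
      = (\<Sum>w\<in>range G. if w = G z then indicator K z *\<^sub>R w else 0)"
    by (intro sum.cong) (auto simp: indicator_def)
  then show ?thesis
    using assms by simp
qed

lemma smooth_approx_simple_admissible:
  fixes \<mu> :: "'a::euclidean_space measure" and \<xi> :: "'a \<Rightarrow> vec2" and e :: real
  assumes sets: "sets \<mu> = sets borel" and \<xi>: "\<xi> \<in> borel_measurable \<mu>" "AE z in \<mu>. norm (\<xi> z) = 1"
    and S: "open S" "emeasure \<mu> S < \<infinity>" and K: "K \<in> sets borel" "K \<subseteq> S"
    and G: "simple_function \<mu> G" "\<And>z. admissible (G z)" and "e > 0"
  obtains \<omega> where "smooth \<omega>" "compact (tsupp \<omega>)" "tsupp \<omega> \<subseteq> S" "\<And>z. admissible (\<omega> z)"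
    "(\<integral> z. indicator K z * (G z \<bullet> \<xi> z) \<partial>\<mu>) \<le> (\<integral> z. \<omega> z \<bullet> \<xi> z \<partial>\<mu>) + e"
proof -
  have space: "space \<mu> = UNIV"
    using sets_eq_imp_space_eq[OF sets] by simp
  define R where "R = range G"
  have R: "finite R" "card R > 0" "\<And>w. w \<in> R \<Longrightarrow> admissible w"
    using G space by (auto simp: simple_function_def R_def card_gt_0_iff)
  define E where "E w = G -` {w} \<inter> K" for w
  have E_sets: "E w \<in> sets borel" for w
    using measurable_sets[OF borel_measurable_simple_function[OF G(1)], of "{w}"] K(1) sets space
    by (auto simp: E_def)
  have E_sub: "E w \<subseteq> S" for w
    using K(2) by (auto simp: E_def)
  have E_disjoint: "disjoint_family_on E R"
    by (auto simp: disjoint_family_on_def E_def)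
  have "e / (2 * card R) > 0"
    using \<open>e > 0\<close> R(2) by simp
  then obtain \<psi> where \<psi>: "\<And>w. w \<in> R \<Longrightarrow> smooth (\<psi> w)" "\<And>w z. w \<in> R \<Longrightarrow> 0 \<le> \<psi> w z"
    "\<And>w z. w \<in> R \<Longrightarrow> \<psi> w z \<le> 1" "\<And>w. w \<in> R \<Longrightarrow> compact (tsupp (\<psi> w))"
    "\<And>w. w \<in> R \<Longrightarrow> tsupp (\<psi> w) \<subseteq> S" "disjoint_family_on (\<lambda>w. tsupp (\<psi> w)) R"
    "\<And>w. w \<in> R \<Longrightarrow> (\<integral> z. \<bar>\<psi> w z - indicator (E w) z\<bar> \<partial>\<mu>) \<le> e / (2 * card R)"
    using smooth_disjoint_indicators_approx[where E = E, OF sets S R(1) E_sets E_sub E_disjoint]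
    by blast
  define \<omega> where "\<omega> z = (\<Sum>w\<in>R. \<psi> w z *\<^sub>R w)" for z
  have \<omega>: "smooth \<omega>" "tsupp \<omega> \<subseteq> (\<Union>w\<in>R. tsupp (\<psi> w))" "compact (tsupp \<omega>)" "\<And>z. admissible (\<omega> z)"
    using admissible_disjoint_combination[OF R(1,3) \<psi>(1-4,6)] unfolding \<omega>_def[abs_def]
    by auto
  have \<psi>_measurable: "\<psi> w \<in> borel_measurable \<mu>" if "w \<in> R" for w
    using borel_measurable_smooth[OF \<psi>(1)[OF that]] measurable_cong_sets[OF sets refl] by blast
  have \<psi>_outside: "\<psi> w z = 0" if "w \<in> R" "z \<notin> S" for w z
    using \<psi>(5)[OF that(1)] that(2) by (blast intro: zero_outside_tsupp)
  have G_eq: "indicator K z * (G z \<bullet> \<xi> z) = (\<Sum>w\<in>R. indicator (E w) z *\<^sub>R w) \<bullet> \<xi> z" for z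
  proof -
    have "indicator K z * (G z \<bullet> \<xi> z) = (indicator K z *\<^sub>R G z) \<bullet> \<xi> z"
      by simp
    then show ?thesis
      unfolding indicator_scaleR_eq_sum_level_sets[OF R(1)[unfolded R_def]] E_def R_def .
  qed
  have E_sets': "E w \<in> sets \<mu>" for w
    using E_sets sets by simp
  have "(\<integral> z. indicator K z * (G z \<bullet> \<xi> z) \<partial>\<mu>)
      \<le> (\<integral> z. \<omega> z \<bullet> \<xi> z \<partial>\<mu>) + (\<Sum>w\<in>R. 2 * (\<integral> z. \<bar>\<psi> w z - indicator (E w) z\<bar> \<partial>\<mu>))"
    unfolding G_eq \<omega>_def
    by (rule integral_indicator_combination_le[where E = E and \<psi> = \<psi>, OF \<xi> _ S(2) R(1,3)
          E_sets' E_sub \<psi>_measurable \<psi>(2,3) \<psi>_outside]) (use S(1) sets in simp)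
  also have "(\<Sum>w\<in>R. 2 * (\<integral> z. \<bar>\<psi> w z - indicator (E w) z\<bar> \<partial>\<mu>)) \<le> (\<Sum>w\<in>R. 2 * (e / (2 * card R)))"
    using \<psi>(7) by (intro sum_mono mult_left_mono) auto
  also have "(\<Sum>w\<in>R. 2 * (e / (2 * card R))) = e"
    using R(2) by simp
  finally show ?thesis
    using \<omega> \<psi>(5) by (intro that) auto
qed

lemma admissible_test_form_approx:
  fixes e :: real
  assumes T: "polar_rep W T \<mu> \<xi>" and S: "open S" "S \<subseteq> W" "emeasure \<mu> S < \<infinity>"
    and K: "K \<in> sets borel" "K \<subseteq> S" and "e > 0"
  obtains \<omega> where "\<omega> \<in> test_forms W" "tsupp \<omega> \<subseteq> S" "\<And>z. admissible (\<omega> z)"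
    "(\<integral>\<^sup>+ z. indicator K z * ennreal (Phi (\<xi> z)) \<partial>\<mu>) \<le> ennreal (T \<omega> + e)"
proof -
  have sets: "sets \<mu> = sets borel" and \<xi>_borel: "\<xi> \<in> borel_measurable borel"
    and \<xi>_unit: "AE z in \<mu>. norm (\<xi> z) = 1"
    and T_rep: "\<And>\<omega>. \<omega> \<in> test_forms W \<Longrightarrow> T \<omega> = (\<integral> z. \<omega> z \<bullet> \<xi> z \<partial>\<mu>)"
    using T by (auto simp: polar_rep_def)
  have \<xi>: "\<xi> \<in> borel_measurable \<mu>" "AE z in \<mu>. norm (\<xi> z) = 1"
    using \<xi>_borel \<xi>_unit measurable_cong_sets[OF sets refl] by blast+
  have S_sets: "S \<in> sets \<mu>"
    using S(1) sets by simp
  have "emeasure \<mu> K \<le> emeasure \<mu> S"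
    using K S_sets by (intro emeasure_mono) auto
  then have K_fin: "emeasure \<mu> K < \<infinity>"
    using S(3) by (rule le_less_trans)
  obtain G where G: "simple_function \<mu> G" "\<And>z. admissible (G z)"
    "(\<integral> z. indicator K z * Phi (\<xi> z) \<partial>\<mu>) \<le> (\<integral> z. indicator K z * (G z \<bullet> \<xi> z) \<partial>\<mu>) + e / 2"
    using simple_admissible_approx[OF \<xi> _ K_fin half_gt_zero[OF \<open>e > 0\<close>]] K(1) sets by auto
  obtain \<omega> where \<omega>: "smooth \<omega>" "compact (tsupp \<omega>)" "tsupp \<omega> \<subseteq> S" "\<And>z. admissible (\<omega> z)"
    "(\<integral> z. indicator K z * (G z \<bullet> \<xi> z) \<partial>\<mu>) \<le> (\<integral> z. \<omega> z \<bullet> \<xi> z \<partial>\<mu>) + e / 2"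
    using smooth_approx_simple_admissible[OF sets \<xi> S(1,3) K G(1,2) half_gt_zero[OF \<open>e > 0\<close>]] by blast
  have \<omega>_test: "\<omega> \<in> test_forms W"
    using \<omega>(1-3) S(2) by (auto simp: test_forms_def)
  have "(\<integral> z. indicator K z * Phi (\<xi> z) \<partial>\<mu>) \<le> T \<omega> + e"
    using G(3) \<omega>(5) T_rep[OF \<omega>_test] by linarith
  moreover have "integrable \<mu> (\<lambda>z. indicator K z * Phi (\<xi> z))"
  proof (rule integrable_bounded_vanishing_outside[OF _ S_sets S(3), where B = 2])
    show "(\<lambda>z. indicator K z * Phi (\<xi> z)) \<in> borel_measurable \<mu>"
      using K(1) sets measurable_compose[OF \<xi>(1) borel_measurable_Phi] by (simp add: o_def)
    show "AE z in \<mu>. \<bar>indicator K z * Phi (\<xi> z)\<bar> \<le> 2"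
      using \<xi>(2) by eventually_elim (auto simp: indicator_def Phi_le_2 Phi_nonneg)
  qed (use K(2) in \<open>auto simp: indicator_def\<close>)
  then have "(\<integral>\<^sup>+ z. indicator K z * ennreal (Phi (\<xi> z)) \<partial>\<mu>) = ennreal (\<integral> z. indicator K z * Phi (\<xi> z) \<partial>\<mu>)"
    by (subst nn_integral_eq_integral[symmetric]) (auto simp: Phi_nonneg indicator_def intro!: nn_integral_cong)
  ultimately show ?thesis
    using \<omega>_test \<omega>(3,4) by (intro that) (auto intro: ennreal_leI)
qed

section \<open>Lower semicontinuity\<close>

lemma ennreal_integral_le_nn_integral:
  fixes f :: "'a \<Rightarrow> real"
  assumes "\<And>z. ennreal (f z) \<le> g z"
  shows "ennreal (\<integral> z. f z \<partial>\<mu>) \<le> (\<integral>\<^sup>+ z. g z \<partial>\<mu>)"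
proof (cases "(\<integral>\<^sup>+ z. g z \<partial>\<mu>) = \<infinity>")
  case False
  then obtain r where r: "(\<integral>\<^sup>+ z. g z \<partial>\<mu>) = ennreal r" "r \<ge> 0"
    by (cases "(\<integral>\<^sup>+ z. g z \<partial>\<mu>)" rule: ennreal_cases) auto
  have "(\<integral>\<^sup>+ z. ennreal (f z) \<partial>\<mu>) \<le> ennreal r"
    using nn_integral_mono[of \<mu> "\<lambda>z. ennreal (f z)" g] assms r(1) by simp
  then have "(\<integral> z. f z \<partial>\<mu>) \<le> r"
    using r(2) by (rule integral_real_bounded[rotated])
  then show ?thesis
    using r by (simp add: ennreal_leI)
qed simp

lemma ennreal_le_liminf_if_tendsto:
  assumes "g \<longlonglongrightarrow> t" "\<And>n. ennreal (g n) \<le> I n"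
  shows "ennreal t \<le> liminf I"
proof -
  have "liminf (\<lambda>n. ennreal (g n)) = ennreal t"
    using tendsto_ennrealI[OF assms(1)] by (intro lim_imp_Liminf) auto
  moreover have "liminf (\<lambda>n. ennreal (g n)) \<le> liminf I"
    using assms(2) by (intro Liminf_mono) auto
  ultimately show ?thesis
    by simp
qed

lemma polar_rep_admissible_le:
  assumes "polar_rep W G \<mu> \<xi>" "\<omega> \<in> test_forms W" "tsupp \<omega> \<subseteq> V" "\<And>z. admissible (\<omega> z)"
  shows "ennreal (G \<omega>) \<le> (\<integral>\<^sup>+ z. indicator V z * ennreal (Phi (\<xi> z)) \<partial>\<mu>)"
proof -
  have "G \<omega> = (\<integral> z. \<omega> z \<bullet> \<xi> z \<partial>\<mu>)"
    using assms(1,2) by (simp add: polar_rep_def)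
  moreover have "ennreal (\<omega> z \<bullet> \<xi> z) \<le> indicator V z * ennreal (Phi (\<xi> z))" for z
  proof (cases "z \<in> V")
    case True
    then show ?thesis
      using admissible_inner_le_Phi[OF assms(4)] by (simp add: ennreal_leI)
  next
    case False
    then have "\<omega> z = 0"
      using assms(3) by (blast intro: zero_outside_tsupp)
    then show ?thesis
      by simp
  qed
  ultimately show ?thesis
    by (simp add: ennreal_integral_le_nn_integral)
qed

lemma Phi_mass_le_liminf:
  assumes T: "polar_rep W T \<mu> \<xi>" and G: "\<And>n. polar_rep W (G n) (\<mu>s n) (\<xi>s n)"
    and conv: "\<And>\<omega>. \<omega> \<in> test_forms W \<Longrightarrow> (\<lambda>n. G n \<omega>) \<longlonglongrightarrow> T \<omega>"
    and S: "open S" "S \<subseteq> V" "V \<subseteq> W" "emeasure \<mu> S < \<infinity>" and K: "K \<in> sets borel" "K \<subseteq> S"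
  shows "(\<integral>\<^sup>+ z. indicator K z * ennreal (Phi (\<xi> z)) \<partial>\<mu>)
    \<le> liminf (\<lambda>n. \<integral>\<^sup>+ z. indicator V z * ennreal (Phi (\<xi>s n z)) \<partial>(\<mu>s n))"
    (is "_ \<le> ?L")
proof (rule ennreal_le_epsilon)
  fix e :: real
  assume "0 < e"
  obtain \<omega> where \<omega>: "\<omega> \<in> test_forms W" "tsupp \<omega> \<subseteq> S" "\<And>z. admissible (\<omega> z)"
    "(\<integral>\<^sup>+ z. indicator K z * ennreal (Phi (\<xi> z)) \<partial>\<mu>) \<le> ennreal (T \<omega> + e)"
    using admissible_test_form_approx[OF T S(1) _ S(4) K \<open>0 < e\<close>] S(2,3) by blast
  have "ennreal (T \<omega>) \<le> ?L"
    using polar_rep_admissible_le[OF G \<omega>(1) _ \<omega>(3)] \<omega>(2) S(2)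
    by (intro ennreal_le_liminf_if_tendsto[OF conv[OF \<omega>(1)]]) blast
  moreover have "ennreal (T \<omega> + e) \<le> ennreal (T \<omega>) + ennreal e"
    using \<open>0 < e\<close> by (auto simp: ennreal_plus_if intro!: ennreal_leI)
  ultimately show "(\<integral>\<^sup>+ z. indicator K z * ennreal (Phi (\<xi> z)) \<partial>\<mu>) \<le> ?L + ennreal e"
    using \<omega>(4) by (meson add_right_mono order_trans)
qed

lemma Phi_mass_lower_semicontinuous:
  fixes V W :: "pt set"
  assumes T: "polar_rep W T \<mu> \<xi>" and G: "\<And>n. polar_rep W (G n) (\<mu>s n) (\<xi>s n)"
    and conv: "\<And>\<omega>. \<omega> \<in> test_forms W \<Longrightarrow> (\<lambda>n. G n \<omega>) \<longlonglongrightarrow> T \<omega>"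
    and V: "open V" "V \<subseteq> W"
  shows "(\<integral>\<^sup>+ z. indicator V z * ennreal (Phi (\<xi> z)) \<partial>\<mu>)
    \<le> liminf (\<lambda>n. \<integral>\<^sup>+ z. indicator V z * ennreal (Phi (\<xi>s n z)) \<partial>(\<mu>s n))"
proof -
  obtain K where K: "\<And>m. compact (K m)" "\<And>m. K m \<subseteq> V" "\<And>m. K m \<subseteq> interior (K (Suc m))"
    "\<Union> (range K) = V"
    using open_Union_compact_subsets[OF V(1)] by metis
  have sets: "sets \<mu> = sets borel" and \<xi>: "\<xi> \<in> borel_measurable borel"
    using T by (auto simp: polar_rep_def)
  have "emeasure \<mu> (interior (K (Suc m))) < \<infinity>" for m
  proof -
    have "compact (K (Suc m)) \<and> K (Suc m) \<subseteq> W"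
      using K(1,2) V(2) by blast
    then have "emeasure \<mu> (K (Suc m)) < \<infinity>"
      using T by (simp add: polar_rep_def)
    moreover have "emeasure \<mu> (interior (K (Suc m))) \<le> emeasure \<mu> (K (Suc m))"
      using sets K(1) by (intro emeasure_mono interior_subset) (auto intro: borel_compact)
    ultimately show ?thesis
      by (simp add: le_less_trans)
  qed
  then have bound: "(\<integral>\<^sup>+ z. indicator (K m) z * ennreal (Phi (\<xi> z)) \<partial>\<mu>)
      \<le> liminf (\<lambda>n. \<integral>\<^sup>+ z. indicator V z * ennreal (Phi (\<xi>s n z)) \<partial>(\<mu>s n))" for m
    using Phi_mass_le_liminf[OF T G conv open_interior _ V(2) _ borel_compact[OF K(1)] K(3)]
      interior_subset K(2) by blast
  let ?\<nu> = "density \<mu> (\<lambda>z. ennreal (Phi (\<xi> z)))"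
  have density: "(\<integral>\<^sup>+ z. indicator A z * ennreal (Phi (\<xi> z)) \<partial>\<mu>) = emeasure ?\<nu> A"
    if "A \<in> sets borel" for A
    using that sets measurable_compose[OF \<xi> borel_measurable_Phi]
    by (subst emeasure_density) (auto simp: measurable_cong_sets[OF sets refl] o_def mult.commute)
  have "incseq K"
    using K(3) interior_subset by (intro incseq_SucI) blast
  moreover have "range K \<subseteq> sets ?\<nu>"
    using K(1) sets by (auto intro: borel_compact)
  ultimately have "emeasure ?\<nu> V = (SUP m. emeasure ?\<nu> (K m))"
    using SUP_emeasure_incseq K(4) by metis
  also have "\<dots> \<le> liminf (\<lambda>n. \<integral>\<^sup>+ z. indicator V z * ennreal (Phi (\<xi>s n z)) \<partial>(\<mu>s n))"
    using bound density[OF borel_compact[OF K(1)]] by (auto intro: SUP_least)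
  finally show ?thesis
    using density[of V] V(1) by simp
qed

theorem proposition4p5:
  fixes \<Omega> :: "complex set" and \<epsilon> :: "nat \<Rightarrow> real" and N :: "nat \<Rightarrow> nat"
    and u :: "nat \<Rightarrow> int \<times> int \<Rightarrow> complex" and T :: current2 and C :: real
  assumes "open \<Omega>" and "bounded \<Omega>" and "lipschitz_boundary \<Omega>"
    and "\<forall>n. \<epsilon> n > 0" and "\<epsilon> \<longlonglongrightarrow> 0" and "\<forall>n. N n > 0"
    and "(\<lambda>n. theta (N n) / (\<epsilon> n * \<bar>ln (\<epsilon> n)\<bar>)) \<longlonglongrightarrow> 0"
    and "\<forall>n i. u n i \<in> clock_set (N n)"
    and "\<forall>n. energy \<Omega> (\<epsilon> n) (u n) / (\<epsilon> n * theta (N n)) \<le> C"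
    and "\<forall>\<omega>\<in>test_forms (\<Omega> \<times> UNIV). (\<lambda>n. G_cur \<Omega> (\<epsilon> n) (u n) \<omega>) \<longlonglongrightarrow> T \<omega>"
    and "cart \<Omega> T"
  shows "\<forall>A. open A \<and> compact (closure A) \<and> closure A \<subseteq> \<Omega> \<longrightarrow>
          (\<forall>\<mu> \<xi> \<mu>s \<xi>s. polar_rep (\<Omega> \<times> UNIV) T \<mu> \<xi> \<and>
             (\<forall>n. polar_rep (\<Omega> \<times> UNIV) (G_cur \<Omega> (\<epsilon> n) (u n)) (\<mu>s n) (\<xi>s n)) \<longrightarrow>
             (\<integral>\<^sup>+ z. indicator (A \<times> UNIV) z * ennreal (Phi (\<xi> z)) \<partial>\<mu>)
               \<le> liminf (\<lambda>n. \<integral>\<^sup>+ z. indicator (A \<times> UNIV) z * ennreal (Phi (\<xi>s n z)) \<partial>(\<mu>s n)))"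
proof (intro allI impI, elim conjE)
  fix A :: "complex set" and \<mu> \<xi> \<mu>s \<xi>s
  assume A: "open A" "compact (closure A)" "closure A \<subseteq> \<Omega>"
    and T: "polar_rep (\<Omega> \<times> UNIV) T \<mu> \<xi>"
    and G: "\<forall>n. polar_rep (\<Omega> \<times> UNIV) (G_cur \<Omega> (\<epsilon> n) (u n)) (\<mu>s n) (\<xi>s n)"
  have "open (A \<times> (UNIV :: complex set))"
    using A(1) by (intro open_Times) auto
  moreover have "A \<times> UNIV \<subseteq> \<Omega> \<times> (UNIV :: complex set)"
    using A(3) closure_subset by blast
  ultimately show "(\<integral>\<^sup>+ z. indicator (A \<times> UNIV) z * ennreal (Phi (\<xi> z)) \<partial>\<mu>)
      \<le> liminf (\<lambda>n. \<integral>\<^sup>+ z. indicator (A \<times> UNIV) z * ennreal (Phi (\<xi>s n z)) \<partial>(\<mu>s n))"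
    using Phi_mass_lower_semicontinuous[OF T, of "\<lambda>n. G_cur \<Omega> (\<epsilon> n) (u n)"] G assms(10)
    by blast
qed

end
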